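(* Let $M>0$, $T\ge1/M$, $y_0\in C^4([0,1])$, $v\in C^4([0,T])$, and for $\varepsilon\in(0,1)$ let $\theta^\varepsilon$ be the solution of $\theta_t+M\theta_x-\varepsilon\theta_{xx}=0$ in $Q_T=(0,1)\times(0,T)$, $\theta(0,t)=\theta(1,t)=0$, $\theta(x,0)=\widetilde P^\varepsilon(x,0)-y_0(x)$, where $\widetilde P^\varepsilon$ is defined in the context and $\widetilde P^\varepsilon(x,0):=\lim_{t\to0^+}\widetilde P^\varepsilon(x,t)$ for $x\in(0,1]$. Let $\gamma\in(0,1/2]$. There exists a constant $c$ independent of $\varepsilon$ such that $$\|\theta^\varepsilon(\cdot,t)\|_{L^2(0,1)}\le c\,e^{-\frac{\varepsilon^\gamma}{\varepsilon}}+c\,\varepsilon^{1/2}e^{-\frac{M^2}{2\varepsilon^\gamma}t}\quad\forall t\in[0,T].$$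
   Context: Notation: $\mathrm{erf}(s)=\frac{2}{\sqrt\pi}\int_0^s e^{-r^2}dr$, $\mathrm{erfc}=1-\mathrm{erf}$. Scaled variables: $w=\frac{x-Mt}{\sqrt\varepsilon}$, $z=\frac{1-x}{\varepsilon}$, $\tau=\frac{1/M-t}{\sqrt\varepsilon}$ (so $M\tau=\frac{1-Mt}{\sqrt\varepsilon}$). Constants: $c^+=y_0(0)$, $c^-=v(0)$, $d^+=y_0'(0)$, $d^-=-v'(0)/M$, $e^+=y_0''(0)$, $e^-=v''(0)/M^2$, $f^+=0$, $f^-=v''(0)/M^3$, $h^+=y_0'''(0)/6$, $h^-=-v'''(0)/(6M^3)$. For $(x,t)$ let $\sigma=+$ if $x>Mt$ and $\sigma=-$ if $x\le Mt$; for $t$ let $s=+$ if $Mt\le1$ and $s=-$ if $Mt>1$. Outer terms: $y^0(x,t)=y_0(x-Mt)$ if $x>Mt$, $=v(t-x/M)$ if $x\le Mt$; $y^1(x,t)=t\,y_0''(x-Mt)$ if $x>Mt$, $=\frac{x}{M^3}v''(t-x/M)$ if $x\le Mt$; $\partial_x y^0(1,t)=y_0'(1-Mt)$ if $Mt<1$, $=-v'(t-1/M)/M$ if $Mt>1$. Inner terms ($w\in\mathbb R$, $t>0$; subscripts $w$ denote $\partial_w$): $W^0(w,t)=c^++\frac{c^--c^+}{2}\mathrm{erfc}(\frac{w}{2\sqrt t})$; $U^0_\varepsilon(w,t)=\frac{c^--c^+}{2}e^{\frac{Mw}{\sqrt\varepsilon}+\frac{M^2t}{\varepsilon}}\mathrm{erfc}(\frac{w}{2\sqrt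 t}+\frac{M\sqrt t}{\sqrt\varepsilon})$; $W^0_\varepsilon=W^0+U^0_\varepsilon$; $W^{1/2}(w,t)=w\big(\frac{d^+-d^-}{2}\mathrm{erf}(\frac{w}{2\sqrt t})+\frac{d^++d^-}{2}\big)+(d^+-d^-)\sqrt{t/\pi}\,e^{-w^2/(4t)}$; $W^1(w,t)=(\frac{w^2}{2}+t)\big(\frac{e^+-e^-}{2}\mathrm{erf}(\frac{w}{2\sqrt t})+\frac{e^++e^-}{2}\big)+\frac{e^+-e^-}{2}w\sqrt{t/\pi}\,e^{-w^2/(4t)}$; $W^{3/2}(w,t)=(\frac{w^3}{2}+3tw)\big((h^+-h^-)\mathrm{erf}(\frac{w}{2\sqrt t})+h^++h^-\big)+(h^+-h^-)(4t+w^2)\sqrt{t/\pi}\,e^{-w^2/(4t)}-f^-\sqrt{t/\pi}\,e^{-w^2/(4t)}+\frac{f^-}{2}w\,\mathrm{erfc}(\frac{w}{2\sqrt t})$. Composite terms (with $w=\frac{x-Mt}{\sqrt\varepsilon}$): $p^0_\varepsilon=y^0(x,t)+W^0_\varepsilon(w,t)-c^\sigma$; $p^{1/2}=W^{1/2}(w,t)-d^\sigma w$; $p^1=y^1(x,t)+W^1(w,t)-e^\sigma(\frac{w^2}{2}+t)$; $p^{3/2}=W^{3/2}(w,t)-h^\sigma(w^3+6tw)-f^\sigma w$. Boundary-layer coefficients (all inner functions evaluated at $(M\tau,t)$): $a_0=y^0(1,t)+W^0_\varepsilon-c^s$; $a_{1/2}=W^{1/2}-M\tau d^s$; $b_{1/2}=W^0_{\varepsilon,w}$;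 $A=y^1(1,t)+W^1-e^s(\frac{(M\tau)^2}{2}+t)$; $B=-\partial_xy^0(1,t)-W^{1/2}_w+d^s$; $C^\varepsilon=W^0_{\varepsilon,ww}$; $\widetilde A=W^{3/2}-h^s((M\tau)^3+6tM\tau)-f^sM\tau$; $\widetilde B=-W^1_w+M\tau e^s$; $\widetilde C=W^{1/2}_{ww}$; $\widetilde D^\varepsilon=-W^0_{\varepsilon,www}$. Approximation: $\widetilde P^\varepsilon(x,t)=p^0_\varepsilon+\sqrt\varepsilon p^{1/2}+\varepsilon p^1+\varepsilon^{3/2}p^{3/2}+e^{-Mz}\big[-a_0-\sqrt\varepsilon(a_{1/2}+b_{1/2}z)+\varepsilon(-A+Bz-C^\varepsilon\frac{z^2}{2})+\varepsilon^{3/2}(-\widetilde A+\widetilde Bz-\widetilde C\frac{z^2}{2}+\widetilde D^\varepsilon\frac{z^3}{6})\big]$, for $(x,t)\in Q_T$. *)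

theory Defs
  imports "HOL-Analysis.Analysis"
begin

definition erf :: "real \<Rightarrow> real" where
  "erf s = 2 / sqrt pi * (LBINT r=0..s. exp (-(r^2)))"

definition erfc :: "real \<Rightarrow> real" where
  "erfc s = 1 - erf s"

text \<open>D 0 is the function, D k its k-th derivative (one-sided at the endpoints).\<close>
definition C4_on :: "real set \<Rightarrow> (nat \<Rightarrow> real \<Rightarrow> real) \<Rightarrow> bool" where
  "C4_on S D \<longleftrightarrow>
     (\<forall>k<4. \<forall>x\<in>S. (D k has_real_derivative D (Suc k) x) (at x within S))
     \<and> continuous_on S (D 4)"

definition sel :: "bool \<Rightarrow> real \<Rightarrow> real \<Rightarrow> real" where
  "sel b p m = (if b then p else m)"

definition cP :: "(nat \<Rightarrow> real \<Rightarrow> real) \<Rightarrow> real" where "cP Y = Y 0 0"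
definition cM :: "(nat \<Rightarrow> real \<Rightarrow> real) \<Rightarrow> real" where "cM V = V 0 0"
definition dP :: "(nat \<Rightarrow> real \<Rightarrow> real) \<Rightarrow> real" where "dP Y = Y 1 0"
definition dM :: "real \<Rightarrow> (nat \<Rightarrow> real \<Rightarrow> real) \<Rightarrow> real" where "dM M V = - V 1 0 / M"
definition eP :: "(nat \<Rightarrow> real \<Rightarrow> real) \<Rightarrow> real" where "eP Y = Y 2 0"
definition eM :: "real \<Rightarrow> (nat \<Rightarrow> real \<Rightarrow> real) \<Rightarrow> real" where "eM M V = V 2 0 / M^2"
definition fP :: real where "fP = 0"
definition fM :: "real \<Rightarrow> (nat \<Rightarrow> real \<Rightarrow> real) \<Rightarrow> real" where "fM M V = V 2 0 / M^3"
definition hP :: "(nat \<Rightarrow> real \<Rightarrow> real) \<Rightarrow> real" where "hP Y = Y 3 0 / 6"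
definition hM :: "real \<Rightarrow> (nat \<Rightarrow> real \<Rightarrow> real) \<Rightarrow> real" where "hM M V = - V 3 0 / (6 * M^3)"

definition y0o :: "real \<Rightarrow> (nat \<Rightarrow> real \<Rightarrow> real) \<Rightarrow> (nat \<Rightarrow> real \<Rightarrow> real) \<Rightarrow> real \<Rightarrow> real \<Rightarrow> real" where
  "y0o M Y V x t = (if x > M * t then Y 0 (x - M * t) else V 0 (t - x / M))"

definition y1o :: "real \<Rightarrow> (nat \<Rightarrow> real \<Rightarrow> real) \<Rightarrow> (nat \<Rightarrow> real \<Rightarrow> real) \<Rightarrow> real \<Rightarrow> real \<Rightarrow> real" where
  "y1o M Y V x t = (if x > M * t then t * Y 2 (x - M * t) else x / M^3 * V 2 (t - x / M))"

text \<open>\<partial>_x y^0(1,t); at M t = 1 we use the first branch (convention s = + iff M t \<le> 1).\<close>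
definition dxy0 :: "real \<Rightarrow> (nat \<Rightarrow> real \<Rightarrow> real) \<Rightarrow> (nat \<Rightarrow> real \<Rightarrow> real) \<Rightarrow> real \<Rightarrow> real" where
  "dxy0 M Y V t = (if M * t \<le> 1 then Y 1 (1 - M * t) else - V 1 (t - 1 / M) / M)"

definition W0 :: "real \<Rightarrow> (nat \<Rightarrow> real \<Rightarrow> real) \<Rightarrow> (nat \<Rightarrow> real \<Rightarrow> real) \<Rightarrow> real \<Rightarrow> real \<Rightarrow> real" where
  "W0 M Y V w t = cP Y + (cM V - cP Y) / 2 * erfc (w / (2 * sqrt t))"

definition U0 :: "real \<Rightarrow> (nat \<Rightarrow> real \<Rightarrow> real) \<Rightarrow> (nat \<Rightarrow> real \<Rightarrow> real) \<Rightarrow> real \<Rightarrow> real \<Rightarrow> real \<Rightarrow> real" where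
  "U0 M Y V \<epsilon> w t = (cM V - cP Y) / 2 * exp (M * w / sqrt \<epsilon> + M^2 * t / \<epsilon>)
      * erfc (w / (2 * sqrt t) + M * sqrt t / sqrt \<epsilon>)"

definition W0e :: "real \<Rightarrow> (nat \<Rightarrow> real \<Rightarrow> real) \<Rightarrow> (nat \<Rightarrow> real \<Rightarrow> real) \<Rightarrow> real \<Rightarrow> real \<Rightarrow> real \<Rightarrow> real" where
  "W0e M Y V \<epsilon> w t = W0 M Y V w t + U0 M Y V \<epsilon> w t"

definition W12 :: "real \<Rightarrow> (nat \<Rightarrow> real \<Rightarrow> real) \<Rightarrow> (nat \<Rightarrow> real \<Rightarrow> real) \<Rightarrow> real \<Rightarrow> real \<Rightarrow> real" where
  "W12 M Y V w t = w * ((dP Y - dM M V) / 2 * erf (w / (2 * sqrt t)) + (dP Y + dM M V) / 2)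
      + (dP Y - dM M V) * sqrt (t / pi) * exp (- (w^2) / (4 * t))"

definition W1 :: "real \<Rightarrow> (nat \<Rightarrow> real \<Rightarrow> real) \<Rightarrow> (nat \<Rightarrow> real \<Rightarrow> real) \<Rightarrow> real \<Rightarrow> real \<Rightarrow> real" where
  "W1 M Y V w t = (w^2 / 2 + t) * ((eP Y - eM M V) / 2 * erf (w / (2 * sqrt t)) + (eP Y + eM M V) / 2)
      + (eP Y - eM M V) / 2 * w * sqrt (t / pi) * exp (- (w^2) / (4 * t))"

definition W32 :: "real \<Rightarrow> (nat \<Rightarrow> real \<Rightarrow> real) \<Rightarrow> (nat \<Rightarrow> real \<Rightarrow> real) \<Rightarrow> real \<Rightarrow> real \<Rightarrow> real" where
  "W32 M Y V w t = (w^3 / 2 + 3 * t * w) * ((hP Y - hM M V) * erf (w / (2 * sqrt t)) + hP Y + hM M V)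
      + (hP Y - hM M V) * (4 * t + w^2) * sqrt (t / pi) * exp (- (w^2) / (4 * t))
      - fM M V * sqrt (t / pi) * exp (- (w^2) / (4 * t))
      + fM M V / 2 * w * erfc (w / (2 * sqrt t))"

definition Ptil :: "real \<Rightarrow> (nat \<Rightarrow> real \<Rightarrow> real) \<Rightarrow> (nat \<Rightarrow> real \<Rightarrow> real) \<Rightarrow> real \<Rightarrow> real \<Rightarrow> real \<Rightarrow> real" where
  "Ptil M Y V \<epsilon> x t =
    (let w = (x - M * t) / sqrt \<epsilon>;
         z = (1 - x) / \<epsilon>;
         \<tau> = (1 / M - t) / sqrt \<epsilon>;
         m = M * \<tau>;
         \<sigma> = (x > M * t);
         s = (M * t \<le> 1);
         p0 = y0o M Y V x t + W0e M Y V \<epsilon> w t - sel \<sigma> (cP Y) (cM V);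
         p12 = W12 M Y V w t - sel \<sigma> (dP Y) (dM M V) * w;
         p1 = y1o M Y V x t + W1 M Y V w t - sel \<sigma> (eP Y) (eM M V) * (w^2 / 2 + t);
         p32 = W32 M Y V w t - sel \<sigma> (hP Y) (hM M V) * (w^3 + 6 * t * w) - sel \<sigma> fP (fM M V) * w;
         a0 = y0o M Y V 1 t + W0e M Y V \<epsilon> m t - sel s (cP Y) (cM V);
         a12 = W12 M Y V m t - m * sel s (dP Y) (dM M V);
         b12 = deriv (\<lambda>u. W0e M Y V \<epsilon> u t) m;
         A = y1o M Y V 1 t + W1 M Y V m t - sel s (eP Y) (eM M V) * (m^2 / 2 + t);
         B = - dxy0 M Y V t - deriv (\<lambda>u. W12 M Y V u t) m + sel s (dP Y) (dM M V);
         C = deriv (deriv (\<lambda>u. W0e M Y V \<epsilon> u t)) m;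
         At = W32 M Y V m t - sel s (hP Y) (hM M V) * (m^3 + 6 * t * m) - sel s fP (fM M V) * m;
         Bt = - deriv (\<lambda>u. W1 M Y V u t) m + m * sel s (eP Y) (eM M V);
         Ct = deriv (deriv (\<lambda>u. W12 M Y V u t)) m;
         Dt = - deriv (deriv (deriv (\<lambda>u. W0e M Y V \<epsilon> u t))) m
     in p0 + sqrt \<epsilon> * p12 + \<epsilon> * p1 + \<epsilon> powr (3/2) * p32
        + exp (- M * z) * (- a0 - sqrt \<epsilon> * (a12 + b12 * z)
             + \<epsilon> * (- A + B * z - C * z^2 / 2)
             + \<epsilon> powr (3/2) * (- At + Bt * z - Ct * z^2 / 2 + Dt * z^3 / 6)))"

definition Ptil0 :: "real \<Rightarrow> (nat \<Rightarrow> real \<Rightarrow> real) \<Rightarrow> (nat \<Rightarrow> real \<Rightarrow> real) \<Rightarrow> real \<Rightarrow> real \<Rightarrow> real" where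
  "Ptil0 M Y V \<epsilon> x = Lim (at_right 0) (\<lambda>t. Ptil M Y V \<epsilon> x t)"

definition L2norm01 :: "(real \<Rightarrow> real) \<Rightarrow> real" where
  "L2norm01 f = sqrt (LINT x:{0..1}|lborel. (f x)^2)"

definition is_solution :: "real \<Rightarrow> real \<Rightarrow> real \<Rightarrow> (real \<Rightarrow> real) \<Rightarrow> (real \<Rightarrow> real \<Rightarrow> real) \<Rightarrow> bool" where
  "is_solution M \<epsilon> T \<theta>0 \<theta> \<longleftrightarrow>
    (\<exists>\<theta>x \<theta>xx \<theta>t.
       (\<forall>x\<in>{0<..<1}. \<forall>t\<in>{0<..<T}.
          ((\<lambda>y. \<theta> y t) has_real_derivative \<theta>x x t) (at x) \<and>
          ((\<lambda>y. \<theta>x y t) has_real_derivative \<theta>xx x t) (at x) \<and>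
          ((\<lambda>s. \<theta> x s) has_real_derivative \<theta>t x t) (at t) \<and>
          \<theta>t x t + M * \<theta>x x t - \<epsilon> * \<theta>xx x t = 0) \<and>
       continuous_on ({0<..<1} \<times> {0<..<T}) (\<lambda>(x,t). \<theta>x x t) \<and>
       continuous_on ({0<..<1} \<times> {0<..<T}) (\<lambda>(x,t). \<theta>xx x t) \<and>
       continuous_on ({0<..<1} \<times> {0<..<T}) (\<lambda>(x,t). \<theta>t x t)) \<and>
    continuous_on ({0..1} \<times> {0<..T}) (\<lambda>(x,t). \<theta> x t) \<and>
    (\<forall>t\<in>{0<..T}. \<theta> 0 t = 0 \<and> \<theta> 1 t = 0) \<and>
    (\<forall>x\<in>{0<..<1}. \<theta> x 0 = \<theta>0 x) \<and>
    ((\<lambda>t. LINT x:{0..1}|lborel. (\<theta> x t - \<theta>0 x)^2) \<longlongrightarrow> 0) (at_right 0)"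

end

theory Submission
  imports Defs "HOL-Probability.Distributions" "HOL-Real_Asymp.Real_Asymp"
begin

text \<open>Before the characteristic \<open>x = M t\<close> reaches a point \<open>x \<in> (0, 1)\<close>, every inner term of
  \<open>P~\<^sup>\<epsilon>\<close> differs from its outer polynomial only by Gaussian factors \<open>exp (- w\<^sup>2 / (4 t))\<close>, so the
  initial datum of \<open>\<theta>\<^sup>\<epsilon>\<close> is exactly the boundary layer
  \<open>- exp (- M (1 - x) / \<epsilon>) (y\<^sub>0(1) + (1 - x) y\<^sub>0'(1))\<close>. Its weighted \<open>L\<^sup>2\<close> norm is
  \<open>O(\<epsilon> exp (- M / \<epsilon>))\<close>, and an energy estimate with weight \<open>exp (M\<^sup>2 t / (2 \<epsilon>) - M x / \<epsilon>)\<close>, which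
  turns \<open>\<theta>\<^sup>2\<close> into a subsolution of the heat equation, gives
  \<open>\<parallel>\<theta>\<^sup>\<epsilon>(t)\<parallel> \<le> C sqrt \<epsilon> exp (- M\<^sup>2 t / (4 \<epsilon>))\<close>. For \<open>\<gamma> \<le> 1/2\<close> this rate dominates
  \<open>M\<^sup>2 / (2 \<epsilon>\<^sup>\<gamma>)\<close> up to the factor \<open>exp (M\<^sup>2 T)\<close>.\<close>

section \<open>The error function\<close>

lemma DERIV_erf: "(erf has_real_derivative 2 / sqrt pi * exp (- (s^2))) (at s)"
proof -
  have "((\<lambda>u. LBINT r=ereal 0..u. exp (- (r^2))) has_vector_derivative exp (- (s^2)))
      (at s within {-\<bar>s\<bar>-1..\<bar>s\<bar>+1})"
    by (rule interval_integral_FTC2) (auto intro!: continuous_intros)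
  then have "((\<lambda>u. LBINT r=0..u. exp (- (r^2))) has_real_derivative exp (- (s^2))) (at s)"
    by (subst (asm) at_within_interior)
       (auto simp: zero_ereal_def has_real_derivative_iff_has_vector_derivative)
  from DERIV_cmult[OF this, of "2 / sqrt pi"] show ?thesis
    by (simp add: erf_def[abs_def])
qed

lemma erf_0 [simp]: "erf 0 = 0"
  by (simp add: erf_def zero_ereal_def)

lemma tendsto_erf_at_top: "(erf \<longlongrightarrow> 1) at_top"
proof -
  have int: "set_integrable lborel {0..} (\<lambda>x::real. exp (- (x^2)))"
    and val: "(LINT x:{0..}|lborel. exp (- (x^2))) = sqrt pi / 2"
    using gaussian_moment_0
    by (simp_all add: set_integrable_def set_lebesgue_integral_def has_bochner_integral_iff)
  have "((\<lambda>b. 2 / sqrt pi * (LINT x:{0..b}|lborel. exp (- (x^2)))) \<longlongrightarrow> 2 / sqrt pi * (sqrt pi / 2)) at_top"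
    using tendsto_set_lebesgue_integral_at_top[OF _ int] val by (intro tendsto_intros) simp
  moreover have "eventually (\<lambda>b. 2 / sqrt pi * (LINT x:{0..b}|lborel. exp (- (x^2))) = erf b) at_top"
    using eventually_ge_at_top[of "0::real"]
    by eventually_elim (simp add: erf_def zero_ereal_def interval_integral_Icc)
  ultimately show ?thesis
    by (auto intro: Lim_transform_eventually)
qed

lemma erf_mono: "a \<le> b \<Longrightarrow> erf a \<le> erf b"
  by (rule DERIV_nonneg_imp_nondecreasing[of a b erf]) (auto intro!: exI DERIV_erf)

lemma erf_le_1: "erf s \<le> 1"
proof (rule tendsto_lowerbound[OF tendsto_erf_at_top])
  show "eventually (\<lambda>b. erf s \<le> erf b) at_top"
    using eventually_ge_at_top[of s] by eventually_elim (rule erf_mono)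
qed simp

lemma erfc_nonneg: "0 \<le> erfc s"
  using erf_le_1[of s] by (simp add: erfc_def)

text \<open>The difference \<open>h s = exp (- s\<^sup>2) - erfc s\<close> vanishes at \<open>0\<close> and at infinity, increases up
  to \<open>s = 1 / sqrt pi\<close> and decreases afterwards.\<close>

lemma erfc_le_exp:
  assumes "0 \<le> s"
  shows "erfc s \<le> exp (- (s^2))"
proof -
  define h where "h s = exp (- (s^2)) - 1 + erf s" for s
  have dh: "(h has_real_derivative exp (- (s^2)) * (2 / sqrt pi - 2 * s)) (at s)" for s
    unfolding h_def
    by (rule derivative_eq_intros DERIV_erf refl | simp)+ (simp add: algebra_simps)
  have "0 \<le> h s"
  proof (cases "s \<le> 1 / sqrt pi")
    case True
    have "h 0 \<le> h s"
    proof (rule DERIV_nonneg_imp_nondecreasing[of 0 s h])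
      fix x assume "0 \<le> x" "x \<le> s"
      then have "2 * x \<le> 2 / sqrt pi" using True by simp
      then show "\<exists>y. DERIV h x :> y \<and> 0 \<le> y" using dh by (intro exI conjI) auto
    qed (use assms in auto)
    then show ?thesis by (simp add: h_def)
  next
    case False
    have "(h \<longlongrightarrow> 0 - 1 + 1) at_top"
      unfolding h_def by (intro tendsto_intros tendsto_erf_at_top) real_asymp
    then have "(h \<longlongrightarrow> 0) at_top" by simp
    then show ?thesis
    proof (rule tendsto_upperbound)
      show "eventually (\<lambda>b. h b \<le> h s) at_top"
        using eventually_ge_at_top[of s]
      proof eventually_elim
        case (elim b)
        show ?case
        proof (rule DERIV_nonpos_imp_nonincreasing[of s b h])
          fix x assume "s \<le> x" "x \<le> b"
          then have "2 / sqrt pi \<le> 2 * x" using False by simp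
          then show "\<exists>y. DERIV h x :> y \<and> y \<le> 0" using dh
            by (intro exI conjI) (auto intro!: mult_nonneg_nonpos)
        qed (use elim in auto)
      qed
    qed simp
  qed
  then show ?thesis by (simp add: h_def erfc_def)
qed

definition gauss :: "real \<Rightarrow> real \<Rightarrow> real" where
  "gauss t u = exp (- (u^2) / (4 * t))"

definition erfc_layer :: "real \<Rightarrow> real \<Rightarrow> real \<Rightarrow> real \<Rightarrow> real" where
  "erfc_layer M \<epsilon> t u = exp (M * u / sqrt \<epsilon> + M^2 * t / \<epsilon>) * erfc (u / (2 * sqrt t) + M * sqrt t / sqrt \<epsilon>)"

lemma W0e_eq_erfc_layer:
  "W0e M Y V \<epsilon> u t = cP Y + (cM V - cP Y) / 2 * erfc (u / (2 * sqrt t)) + (cM V - cP Y) / 2 * erfc_layer M \<epsilon> t u"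
  by (simp add: W0e_def W0_def U0_def erfc_layer_def mult.assoc)

lemma square_scaled: "0 < t \<Longrightarrow> (u / (2 * sqrt t))^2 = u^2 / (4 * t)"
  by (simp add: power_divide power_mult_distrib)

lemma erfc_layer_exponent:
  assumes "0 < t" "0 < \<epsilon>"
  shows "M * u / sqrt \<epsilon> + M^2 * t / \<epsilon> - (u / (2 * sqrt t) + M * sqrt t / sqrt \<epsilon>)^2 = - (u^2) / (4 * t)"
proof -
  obtain a b where "0 < a" "t = a^2" "0 < b" "\<epsilon> = b^2"
    using assms by (metis real_sqrt_gt_zero real_sqrt_pow2 less_eq_real_def)
  then show ?thesis by (simp add: field_simps power2_eq_square)
qed

lemma erfc_scaled_le_gauss: "0 < t \<Longrightarrow> 0 \<le> u \<Longrightarrow> erfc (u / (2 * sqrt t)) \<le> gauss t u"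
  using erfc_le_exp[of "u / (2 * sqrt t)"] by (simp add: gauss_def square_scaled)

lemma erfc_layer_nonneg: "0 \<le> erfc_layer M \<epsilon> t u"
  by (simp add: erfc_layer_def erfc_nonneg)

lemma erfc_layer_le_gauss:
  assumes "0 < t" "0 < \<epsilon>" "0 < M" "0 \<le> u"
  shows "erfc_layer M \<epsilon> t u \<le> gauss t u"
proof -
  have "erfc_layer M \<epsilon> t u
      \<le> exp (M * u / sqrt \<epsilon> + M^2 * t / \<epsilon>) * exp (- ((u / (2 * sqrt t) + M * sqrt t / sqrt \<epsilon>)^2))"
    unfolding erfc_layer_def using assms by (intro mult_left_mono erfc_le_exp) simp_all
  also have "\<dots> = gauss t u"
    unfolding gauss_def using erfc_layer_exponent[OF assms(1,2), of M u] by (simp flip: exp_add)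
  finally show ?thesis .
qed

lemma tendsto_gauss_mult:
  assumes u: "(u \<longlongrightarrow> u0) (at_right 0)" "0 < u0" and f: "(f \<longlongrightarrow> l) (at_right 0)"
  shows "((\<lambda>t. f t * (1 / sqrt t)^n * gauss t (u t)) \<longlongrightarrow> 0) (at_right 0)"
proof (rule Lim_null_comparison)
  define c where "c = u0^2 / 16"
  have "0 < c" using u unfolding c_def by simp
  then have "((\<lambda>t::real. (1 / sqrt t)^n * exp (- c / t)) \<longlongrightarrow> 0) (at_right 0)"
    by real_asymp
  from tendsto_mult_left[OF this, of "norm l + 1"]
  show "((\<lambda>t. (norm l + 1) * ((1 / sqrt t)^n * exp (- c / t))) \<longlongrightarrow> 0) (at_right 0)"
    by simp
  have "eventually (\<lambda>t. u0 / 2 < u t) (at_right 0)"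
    using order_tendstoD(1)[OF u(1), of "u0/2"] u(2) by simp
  moreover have "eventually (\<lambda>t. dist (f t) l < 1) (at_right 0)"
    using tendstoD[OF f, of 1] by simp
  moreover have "eventually (\<lambda>t. 0 < t) (at_right (0::real))"
    by (simp add: eventually_at_right_less)
  ultimately show "eventually (\<lambda>t. norm (f t * (1 / sqrt t)^n * gauss t (u t))
      \<le> (norm l + 1) * ((1 / sqrt t)^n * exp (- c / t))) (at_right 0)"
  proof eventually_elim
    case (elim t)
    have "(u0/2)^2 \<le> (u t)^2" using elim u(2) by (intro power_mono) auto
    then have "c / t \<le> (u t)^2 / (4 * t)"
      using elim unfolding c_def by (simp add: divide_right_mono field_simps)
    then have "norm ((1 / sqrt t)^n * gauss t (u t)) \<le> (1 / sqrt t)^n * exp (- c / t)"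
      using elim by (simp add: gauss_def abs_mult)
    moreover have "norm (f t) \<le> norm l + 1"
      using elim by (simp add: dist_real_def)
    ultimately have "norm (f t) * norm ((1 / sqrt t)^n * gauss t (u t))
        \<le> (norm l + 1) * ((1 / sqrt t)^n * exp (- c / t))"
      by (intro mult_mono) auto
    then show ?case by (simp only: norm_mult mult.assoc)
  qed
qed

lemma tendsto_gauss_mult_eventually:
  assumes "(u \<longlongrightarrow> u0) (at_right 0)" "0 < u0" "(f \<longlongrightarrow> l) (at_right 0)"
    and "eventually (\<lambda>t. g t = f t * (1 / sqrt t)^n * gauss t (u t)) (at_right 0)"
  shows "(g \<longlongrightarrow> 0) (at_right 0)"
  using tendsto_gauss_mult[OF assms(1-3), of n]
  by (rule Lim_transform_eventually) (use assms(4) in \<open>auto elim: eventually_mono\<close>)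

lemma tendsto_le_gauss:
  assumes "(u \<longlongrightarrow> u0) (at_right 0)" "0 < u0"
    and "\<And>t u. 0 < t \<Longrightarrow> 0 < u \<Longrightarrow> 0 \<le> h t u \<and> h t u \<le> gauss t u"
  shows "((\<lambda>t. h t (u t)) \<longlongrightarrow> 0) (at_right 0)"
proof (rule Lim_null_comparison)
  show "((\<lambda>t. 1 * (1 / sqrt t)^0 * gauss t (u t)) \<longlongrightarrow> 0) (at_right 0)"
    by (rule tendsto_gauss_mult[OF assms(1,2) tendsto_const])
  have "eventually (\<lambda>t. 0 < u t) (at_right 0)"
    using order_tendstoD(1)[OF assms(1), of 0] assms(2) by simp
  then show "eventually (\<lambda>t. norm (h t (u t)) \<le> 1 * (1 / sqrt t)^0 * gauss t (u t)) (at_right 0)"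
    using eventually_at_right_less[of 0]
    by eventually_elim (use assms(3) in fastforce)
qed

definition "W0e_w M Y V \<epsilon> u t = (cM V - cP Y) / 2 *
  (M / sqrt \<epsilon> * erfc_layer M \<epsilon> t u - 2 * (gauss t u / (sqrt pi * sqrt t)))"

definition "W0e_ww M Y V \<epsilon> u t = (cM V - cP Y) / 2 *
  ((M / sqrt \<epsilon>)^2 * erfc_layer M \<epsilon> t u - (M / sqrt \<epsilon>) * (gauss t u / (sqrt pi * sqrt t))
   + (u / t) * (gauss t u / (sqrt pi * sqrt t)))"

definition "W0e_www M Y V \<epsilon> u t = (cM V - cP Y) / 2 *
  ((M / sqrt \<epsilon>)^3 * erfc_layer M \<epsilon> t u - (M / sqrt \<epsilon>)^2 * (gauss t u / (sqrt pi * sqrt t))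
   + (M / sqrt \<epsilon>) * (u / (2 * t)) * (gauss t u / (sqrt pi * sqrt t))
   + (1 / t) * (gauss t u / (sqrt pi * sqrt t))
   - (u^2 / (2 * t^2)) * (gauss t u / (sqrt pi * sqrt t)))"

definition "W12_w M Y V u t = (dP Y - dM M V) / 2 * erf (u / (2 * sqrt t)) + (dP Y + dM M V) / 2"

definition "W12_ww M Y V u t = (dP Y - dM M V) / 2 * (gauss t u / (sqrt pi * sqrt t))"

definition "W1_w M Y V u t = u * ((eP Y - eM M V) / 2 * erf (u / (2 * sqrt t)) + (eP Y + eM M V) / 2)
   + (eP Y - eM M V) * t * (gauss t u / (sqrt pi * sqrt t))"

lemma sqrt_div_pi: "0 < t \<Longrightarrow> sqrt (t / pi) = t / (sqrt pi * sqrt t)"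
  by (simp add: real_sqrt_divide field_simps)

lemma DERIV_erf_scaled:
  assumes "0 < t"
  shows "((\<lambda>u. erf (u / (2 * sqrt t))) has_real_derivative gauss t u / (sqrt pi * sqrt t)) (at u)"
proof -
  have "((\<lambda>u. erf (u / (2 * sqrt t))) has_real_derivative
      2 / sqrt pi * exp (- ((u / (2 * sqrt t))^2)) * (1 / (2 * sqrt t))) (at u)"
    using DERIV_chain2[OF DERIV_erf DERIV_cdivide[OF DERIV_ident, where c = "2 * sqrt t"]] by simp
  also have "2 / sqrt pi * exp (- ((u / (2 * sqrt t))^2)) * (1 / (2 * sqrt t)) = gauss t u / (sqrt pi * sqrt t)"
    using assms by (simp add: gauss_def square_scaled)
  finally show ?thesis .
qed

lemma DERIV_gauss:
  assumes "0 < t"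
  shows "((\<lambda>u. gauss t u) has_real_derivative - (u / (2 * t)) * gauss t u) (at u)"
  unfolding gauss_def using assms
  by (auto intro!: derivative_eq_intros simp: field_simps power2_eq_square)

lemma DERIV_gauss_scaled:
  assumes "0 < t"
  shows "((\<lambda>u. gauss t u / (sqrt pi * sqrt t)) has_real_derivative
           - (u / (2 * t)) * (gauss t u / (sqrt pi * sqrt t))) (at u)"
  using DERIV_cdivide[OF DERIV_gauss[OF assms], where c = "sqrt pi * sqrt t"] by simp

lemma DERIV_erfc_layer:
  assumes "0 < t" "0 < \<epsilon>"
  shows "((\<lambda>u. erfc_layer M \<epsilon> t u) has_real_derivative
           M / sqrt \<epsilon> * erfc_layer M \<epsilon> t u - gauss t u / (sqrt pi * sqrt t)) (at u)"
proof -
  define s where "s u = u / (2 * sqrt t) + M * sqrt t / sqrt \<epsilon>" for u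
  define e where "e u = exp (M * u / sqrt \<epsilon> + M^2 * t / \<epsilon>)" for u
  have ds: "(s has_real_derivative 1 / (2 * sqrt t)) (at u)"
    unfolding s_def using DERIV_add[OF DERIV_cdivide[OF DERIV_ident, where c = "2 * sqrt t"] DERIV_const]
    by simp
  have de: "(e has_real_derivative e u * (M / sqrt \<epsilon>)) (at u)"
    unfolding e_def using assms by (auto intro!: derivative_eq_intros simp: field_simps)
  have "((\<lambda>u. erfc (s u)) has_real_derivative - (2 / sqrt pi * exp (- ((s u)^2)) * (1 / (2 * sqrt t)))) (at u)"
    unfolding erfc_def by (auto intro!: derivative_eq_intros DERIV_chain2[OF DERIV_erf ds])
  from DERIV_mult[OF de this] have "((\<lambda>u. e u * erfc (s u)) has_real_derivative
      e u * (M / sqrt \<epsilon>) * erfc (s u) + - (2 / sqrt pi * exp (- ((s u)^2)) * (1 / (2 * sqrt t))) * e u) (at u)"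
    by simp
  moreover have "e u * exp (- ((s u)^2)) = gauss t u"
    unfolding gauss_def e_def s_def using erfc_layer_exponent[OF assms, of M u] by (simp flip: exp_add)
  ultimately show ?thesis
    unfolding erfc_layer_def e_def[symmetric] s_def[symmetric] using assms by (simp add: field_simps)
qed

lemma DERIV_W0e:
  assumes "0 < t" "0 < \<epsilon>"
  shows "((\<lambda>u. W0e M Y V \<epsilon> u t) has_real_derivative W0e_w M Y V \<epsilon> u t) (at u)"
  unfolding W0e_eq_erfc_layer W0e_w_def erfc_def
  by (rule DERIV_erf_scaled DERIV_erfc_layer derivative_eq_intros assms refl)+
     (use assms in \<open>simp add: field_simps\<close>)

lemma DERIV_W0e_w:
  assumes "0 < t" "0 < \<epsilon>"
  shows "((\<lambda>u. W0e_w M Y V \<epsilon> u t) has_real_derivative W0e_ww M Y V \<epsilon> u t) (at u)"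
  unfolding W0e_w_def[abs_def] W0e_ww_def
  by (rule DERIV_gauss_scaled DERIV_erfc_layer derivative_eq_intros assms refl)+
     (use assms in \<open>simp add: algebra_simps power2_eq_square\<close>)

lemma DERIV_W0e_ww:
  assumes "0 < t" "0 < \<epsilon>"
  shows "((\<lambda>u. W0e_ww M Y V \<epsilon> u t) has_real_derivative W0e_www M Y V \<epsilon> u t) (at u)"
proof -
  have "((\<lambda>u. W0e_ww M Y V \<epsilon> u t) has_real_derivative (cM V - cP Y) / 2 *
      ((M / sqrt \<epsilon>)^2 * (M / sqrt \<epsilon> * erfc_layer M \<epsilon> t u - gauss t u / (sqrt pi * sqrt t))
       - (M / sqrt \<epsilon>) * (- (u / (2 * t)) * (gauss t u / (sqrt pi * sqrt t)))
       + (1 / t * (gauss t u / (sqrt pi * sqrt t)) + (- (u / (2 * t)) * (gauss t u / (sqrt pi * sqrt t))) * (u / t)))) (at u)"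
    unfolding W0e_ww_def
    by (intro DERIV_add DERIV_cmult DERIV_diff DERIV_mult DERIV_cdivide[OF DERIV_ident, simplified]
        DERIV_gauss_scaled DERIV_erfc_layer assms)
  then show ?thesis
    unfolding W0e_www_def using assms by (simp add: algebra_simps power2_eq_square power3_eq_cube)
qed

lemma DERIV_W12:
  assumes "0 < t"
  shows "((\<lambda>u. W12 M Y V u t) has_real_derivative W12_w M Y V u t) (at u)"
proof -
  have "(\<lambda>u. W12 M Y V u t) = (\<lambda>u. u * ((dP Y - dM M V) / 2 * erf (u / (2 * sqrt t)) + (dP Y + dM M V) / 2)
      + (dP Y - dM M V) * t * (gauss t u / (sqrt pi * sqrt t)))"
    using assms by (intro ext) (simp add: W12_def gauss_def sqrt_div_pi)
  note e = this
  show ?thesis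
    unfolding e W12_w_def
    by (rule DERIV_erf_scaled DERIV_gauss_scaled derivative_eq_intros assms refl)+
       (use assms in \<open>simp add: field_simps\<close>)
qed

lemma DERIV_W12_w:
  assumes "0 < t"
  shows "((\<lambda>u. W12_w M Y V u t) has_real_derivative W12_ww M Y V u t) (at u)"
  unfolding W12_w_def W12_ww_def
  by (rule derivative_eq_intros DERIV_erf_scaled assms refl)+ (simp add: field_simps)

lemma DERIV_W1:
  assumes "0 < t"
  shows "((\<lambda>u. W1 M Y V u t) has_real_derivative W1_w M Y V u t) (at u)"
proof -
  have e: "(\<lambda>u. W1 M Y V u t) = (\<lambda>u. (u^2 / 2 + t) * ((eP Y - eM M V) / 2 * erf (u / (2 * sqrt t)) + (eP Y + eM M V) / 2)
      + (eP Y - eM M V) / 2 * t * (u * (gauss t u / (sqrt pi * sqrt t))))"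
    using assms by (intro ext) (simp add: W1_def gauss_def sqrt_div_pi)
  have "((\<lambda>u. W1 M Y V u t) has_real_derivative
      (2 * u / 2 + 0) * ((eP Y - eM M V) / 2 * erf (u / (2 * sqrt t)) + (eP Y + eM M V) / 2)
      + ((eP Y - eM M V) / 2 * (gauss t u / (sqrt pi * sqrt t)) + 0) * (u^2 / 2 + t)
      + (eP Y - eM M V) / 2 * t * (1 * (gauss t u / (sqrt pi * sqrt t))
        + (- (u / (2 * t)) * (gauss t u / (sqrt pi * sqrt t))) * u)) (at u)"
    unfolding e
    by (intro DERIV_add DERIV_cmult DERIV_const DERIV_mult DERIV_ident DERIV_gauss_scaled DERIV_erf_scaled assms)
       (auto intro!: derivative_eq_intros)
  then show ?thesis
    by (rule DERIV_cong) (use assms in \<open>simp add: W1_w_def field_simps power2_eq_square\<close>)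
qed

lemma deriv_inner_terms:
  assumes "0 < t" "0 < \<epsilon>"
  shows "deriv (\<lambda>u. W0e M Y V \<epsilon> u t) = (\<lambda>u. W0e_w M Y V \<epsilon> u t)"
    and "deriv (\<lambda>u. W0e_w M Y V \<epsilon> u t) = (\<lambda>u. W0e_ww M Y V \<epsilon> u t)"
    and "deriv (\<lambda>u. W0e_ww M Y V \<epsilon> u t) = (\<lambda>u. W0e_www M Y V \<epsilon> u t)"
    and "deriv (\<lambda>u. W12 M Y V u t) = (\<lambda>u. W12_w M Y V u t)"
    and "deriv (\<lambda>u. W12_w M Y V u t) = (\<lambda>u. W12_ww M Y V u t)"
    and "deriv (\<lambda>u. W1 M Y V u t) = (\<lambda>u. W1_w M Y V u t)"
  using DERIV_W0e DERIV_W0e_w DERIV_W0e_ww DERIV_W12 DERIV_W12_w DERIV_W1 assms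
  by (auto intro!: ext DERIV_imp_deriv)

context
  fixes u :: "real \<Rightarrow> real" and u0 :: real
  assumes u: "(u \<longlongrightarrow> u0) (at_right 0)" "0 < u0"
begin

lemma tendsto_gauss_scaled_mult:
  assumes "(f \<longlongrightarrow> l) (at_right 0)"
  shows "((\<lambda>t. f t * (1 / t)^k * (gauss t (u t) / (sqrt pi * sqrt t))) \<longlongrightarrow> 0) (at_right 0)"
proof (rule tendsto_gauss_mult_eventually[OF u tendsto_mult_right[OF assms, of "1 / sqrt pi"], where n = "2 * k + 1"])
  show "\<forall>\<^sub>F t in at_right 0. f t * (1 / t)^k * (gauss t (u t) / (sqrt pi * sqrt t))
      = f t * (1 / sqrt pi) * (1 / sqrt t)^(2 * k + 1) * gauss t (u t)"
    using eventually_at_right_less[of 0]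
    by eventually_elim (simp add: power_add power_mult power_divide)
qed

lemma tendsto_gauss_terms:
  shows "((\<lambda>t. gauss t (u t)) \<longlongrightarrow> 0) (at_right 0)"
    and "((\<lambda>t. gauss t (u t) / (sqrt pi * sqrt t)) \<longlongrightarrow> 0) (at_right 0)"
    and "((\<lambda>t. t * (gauss t (u t) / (sqrt pi * sqrt t))) \<longlongrightarrow> 0) (at_right 0)"
    and "((\<lambda>t. u t / t * (gauss t (u t) / (sqrt pi * sqrt t))) \<longlongrightarrow> 0) (at_right 0)"
    and "((\<lambda>t. u t / (2 * t) * (gauss t (u t) / (sqrt pi * sqrt t))) \<longlongrightarrow> 0) (at_right 0)"
    and "((\<lambda>t. 1 / t * (gauss t (u t) / (sqrt pi * sqrt t))) \<longlongrightarrow> 0) (at_right 0)"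
    and "((\<lambda>t. (u t)^2 / (2 * t^2) * (gauss t (u t) / (sqrt pi * sqrt t))) \<longlongrightarrow> 0) (at_right 0)"
  using tendsto_gauss_mult[OF u tendsto_const, of 1 0]
    tendsto_gauss_scaled_mult[OF tendsto_const, of 1 0]
    tendsto_gauss_scaled_mult[OF tendsto_ident_at, of 0]
    tendsto_gauss_scaled_mult[OF u(1), of 1]
    tendsto_gauss_scaled_mult[OF tendsto_divide[OF u(1) tendsto_const], of 2 1]
    tendsto_gauss_scaled_mult[OF tendsto_const, of 1 1]
    tendsto_gauss_scaled_mult[OF tendsto_divide[OF tendsto_power[OF u(1)] tendsto_const], of 2 2 2]
  by (simp_all add: power_divide)

lemma tendsto_erfc_scaled: "((\<lambda>t. erfc (u t / (2 * sqrt t))) \<longlongrightarrow> 0) (at_right 0)"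
  by (rule tendsto_le_gauss[OF u]) (simp add: erfc_nonneg erfc_scaled_le_gauss)

lemma tendsto_erf_scaled: "((\<lambda>t. erf (u t / (2 * sqrt t))) \<longlongrightarrow> 1) (at_right 0)"
  using tendsto_diff[OF tendsto_const[of 1] tendsto_erfc_scaled] by (simp add: erfc_def)

lemma tendsto_erfc_layer:
  assumes "0 < M" "0 < \<epsilon>"
  shows "((\<lambda>t. erfc_layer M \<epsilon> t (u t)) \<longlongrightarrow> 0) (at_right 0)"
  by (rule tendsto_le_gauss[OF u]) (simp add: assms erfc_layer_nonneg erfc_layer_le_gauss)

lemma tendsto_W0e_terms:
  assumes "0 < M" "0 < \<epsilon>"
  shows "((\<lambda>t. W0e M Y V \<epsilon> (u t) t) \<longlongrightarrow> cP Y) (at_right 0)"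
    and "((\<lambda>t. W0e_w M Y V \<epsilon> (u t) t) \<longlongrightarrow> 0) (at_right 0)"
    and "((\<lambda>t. W0e_ww M Y V \<epsilon> (u t) t) \<longlongrightarrow> 0) (at_right 0)"
    and "((\<lambda>t. W0e_www M Y V \<epsilon> (u t) t) \<longlongrightarrow> 0) (at_right 0)"
proof -
  note lims = tendsto_erfc_scaled tendsto_erfc_layer[OF assms] tendsto_gauss_terms
  have "((\<lambda>t. W0e M Y V \<epsilon> (u t) t) \<longlongrightarrow> cP Y + (cM V - cP Y) / 2 * 0 + (cM V - cP Y) / 2 * 0) (at_right 0)"
    unfolding W0e_eq_erfc_layer by (intro tendsto_intros lims)
  then show "((\<lambda>t. W0e M Y V \<epsilon> (u t) t) \<longlongrightarrow> cP Y) (at_right 0)"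
    by simp
  have "((\<lambda>t. W0e_w M Y V \<epsilon> (u t) t) \<longlongrightarrow> (cM V - cP Y) / 2 * (M / sqrt \<epsilon> * 0 - 2 * 0)) (at_right 0)"
    unfolding W0e_w_def by (intro tendsto_intros lims)
  then show "((\<lambda>t. W0e_w M Y V \<epsilon> (u t) t) \<longlongrightarrow> 0) (at_right 0)"
    by simp
  have "((\<lambda>t. W0e_ww M Y V \<epsilon> (u t) t) \<longlongrightarrow> (cM V - cP Y) / 2 * ((M / sqrt \<epsilon>)^2 * 0 - M / sqrt \<epsilon> * 0 + 0)) (at_right 0)"
    unfolding W0e_ww_def by (intro tendsto_intros lims)
  then show "((\<lambda>t. W0e_ww M Y V \<epsilon> (u t) t) \<longlongrightarrow> 0) (at_right 0)"
    by simp
  have "((\<lambda>t. W0e_www M Y V \<epsilon> (u t) t) \<longlongrightarrow> (cM V - cP Y) / 2 *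
      ((M / sqrt \<epsilon>)^3 * 0 - (M / sqrt \<epsilon>)^2 * 0 + M / sqrt \<epsilon> * 0 + 0 - 0)) (at_right 0)"
    unfolding W0e_www_def mult.assoc[of "M / sqrt \<epsilon>"] by (intro tendsto_intros lims)
  then show "((\<lambda>t. W0e_www M Y V \<epsilon> (u t) t) \<longlongrightarrow> 0) (at_right 0)"
    by simp
qed

lemma tendsto_W12_terms:
  shows "((\<lambda>t. W12 M Y V (u t) t) \<longlongrightarrow> u0 * dP Y) (at_right 0)"
    and "((\<lambda>t. W12_w M Y V (u t) t) \<longlongrightarrow> dP Y) (at_right 0)"
    and "((\<lambda>t. W12_ww M Y V (u t) t) \<longlongrightarrow> 0) (at_right 0)"
proof -
  note lims = u(1) tendsto_erf_scaled tendsto_gauss_terms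
  have "((\<lambda>t. W12 M Y V (u t) t) \<longlongrightarrow>
      u0 * ((dP Y - dM M V) / 2 * 1 + (dP Y + dM M V) / 2) + (dP Y - dM M V) * sqrt (0 / pi) * 0) (at_right 0)"
    unfolding W12_def gauss_def[symmetric] by (intro tendsto_intros lims) simp_all
  then show "((\<lambda>t. W12 M Y V (u t) t) \<longlongrightarrow> u0 * dP Y) (at_right 0)"
    by (simp add: field_simps)
  have "((\<lambda>t. W12_w M Y V (u t) t) \<longlongrightarrow> (dP Y - dM M V) / 2 * 1 + (dP Y + dM M V) / 2) (at_right 0)"
    unfolding W12_w_def by (intro tendsto_intros lims)
  then show "((\<lambda>t. W12_w M Y V (u t) t) \<longlongrightarrow> dP Y) (at_right 0)"
    by (simp add: field_simps)
  have "((\<lambda>t. W12_ww M Y V (u t) t) \<longlongrightarrow> (dP Y - dM M V) / 2 * 0) (at_right 0)"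
    unfolding W12_ww_def by (intro tendsto_intros lims)
  then show "((\<lambda>t. W12_ww M Y V (u t) t) \<longlongrightarrow> 0) (at_right 0)"
    by simp
qed

lemma tendsto_W1_terms:
  shows "((\<lambda>t. W1 M Y V (u t) t) \<longlongrightarrow> u0^2 / 2 * eP Y) (at_right 0)"
    and "((\<lambda>t. W1_w M Y V (u t) t) \<longlongrightarrow> u0 * eP Y) (at_right 0)"
proof -
  note lims = u(1) tendsto_erf_scaled tendsto_gauss_terms
  have "((\<lambda>t. W1 M Y V (u t) t) \<longlongrightarrow> (u0^2 / 2 + 0) * ((eP Y - eM M V) / 2 * 1 + (eP Y + eM M V) / 2)
      + (eP Y - eM M V) / 2 * u0 * sqrt (0 / pi) * 0) (at_right 0)"
    unfolding W1_def gauss_def[symmetric] by (intro tendsto_intros lims) simp_all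
  then show "((\<lambda>t. W1 M Y V (u t) t) \<longlongrightarrow> u0^2 / 2 * eP Y) (at_right 0)"
    by (simp add: field_simps)
  have "((\<lambda>t. W1_w M Y V (u t) t) \<longlongrightarrow> u0 * ((eP Y - eM M V) / 2 * 1 + (eP Y + eM M V) / 2)
      + (eP Y - eM M V) * 0) (at_right 0)"
    unfolding W1_w_def mult.assoc[of "eP Y - eM M V"] by (intro tendsto_intros lims)
  then show "((\<lambda>t. W1_w M Y V (u t) t) \<longlongrightarrow> u0 * eP Y) (at_right 0)"
    by (simp add: field_simps)
qed

lemma tendsto_W32: "((\<lambda>t. W32 M Y V (u t) t) \<longlongrightarrow> hP Y * u0^3) (at_right 0)"
proof -
  note lims = u(1) tendsto_erf_scaled tendsto_erfc_scaled tendsto_gauss_terms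
  have "((\<lambda>t. W32 M Y V (u t) t) \<longlongrightarrow> (u0^3 / 2 + 3 * 0 * u0) * ((hP Y - hM M V) * 1 + hP Y + hM M V)
      + (hP Y - hM M V) * (4 * 0 + u0^2) * sqrt (0 / pi) * 0 - fM M V * sqrt (0 / pi) * 0
      + fM M V / 2 * u0 * 0) (at_right 0)"
    unfolding W32_def gauss_def[symmetric] by (intro tendsto_intros lims) simp_all
  then show ?thesis
    by (simp add: field_simps)
qed

end

section \<open>The initial datum of the error\<close>

lemma tendsto_C4_on_shift:
  assumes "C4_on {0..1} Y" "k < 4" "0 < p" "p \<le> 1" "0 < M"
  shows "((\<lambda>t. Y k (p - M * t)) \<longlongrightarrow> Y k p) (at_right 0)"
proof -
  have "(Y k has_real_derivative Y (Suc k) p) (at p within {0..1})"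
    using assms unfolding C4_on_def by auto
  then have "continuous (at p within {0..1}) (Y k)"
    by (rule DERIV_continuous)
  moreover have "eventually (\<lambda>t. t < p / M) (at_right (0::real))"
    unfolding eventually_at_right_field using assms by (intro exI[of _ "p / M"]) auto
  with eventually_at_right_less[of 0] have "eventually (\<lambda>t. p - M * t \<in> {0..1}) (at_right 0)"
  proof eventually_elim
    case (elim t)
    then have "0 \<le> M * t" "M * t < p" using assms by (auto simp: field_simps)
    then show ?case using assms by auto
  qed
  moreover have "((\<lambda>t. p - M * t) \<longlongrightarrow> p) (at_right 0)"
    using tendsto_diff[OF tendsto_const tendsto_mult_left[OF tendsto_ident_at], of p M 0 "{0<..}"] by simp
  ultimately show ?thesis
    by (rule continuous_within_tendsto_compose)
qed

text \<open>\<open>P~\<^sup>\<epsilon>\<close> in the region \<open>x > M t\<close> (so \<open>\<sigma> = s = +\<close>), with the \<open>w\<close>-derivatives of its boundary-layer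
  coefficients in closed form.\<close>

definition Ptil_right :: "real \<Rightarrow> (nat \<Rightarrow> real \<Rightarrow> real) \<Rightarrow> (nat \<Rightarrow> real \<Rightarrow> real) \<Rightarrow> real \<Rightarrow> real \<Rightarrow> real \<Rightarrow> real" where
  "Ptil_right M Y V \<epsilon> x t =
    (let w = (x - M * t) / sqrt \<epsilon>; z = (1 - x) / \<epsilon>; m = M * ((1 / M - t) / sqrt \<epsilon>) in
       Y 0 (x - M * t) + W0e M Y V \<epsilon> w t - cP Y
     + sqrt \<epsilon> * (W12 M Y V w t - dP Y * w)
     + \<epsilon> * (t * Y 2 (x - M * t) + W1 M Y V w t - eP Y * (w^2 / 2 + t))
     + \<epsilon> powr (3/2) * (W32 M Y V w t - hP Y * (w^3 + 6 * t * w))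
     + exp (- M * z) * (- (Y 0 (1 - M * t) + W0e M Y V \<epsilon> m t - cP Y)
         - sqrt \<epsilon> * (W12 M Y V m t - m * dP Y + W0e_w M Y V \<epsilon> m t * z)
         + \<epsilon> * (- (t * Y 2 (1 - M * t) + W1 M Y V m t - eP Y * (m^2 / 2 + t))
                + (- Y 1 (1 - M * t) - W12_w M Y V m t + dP Y) * z - W0e_ww M Y V \<epsilon> m t * z^2 / 2)
         + \<epsilon> powr (3/2) * (- (W32 M Y V m t - hP Y * (m^3 + 6 * t * m))
                + (- W1_w M Y V m t + m * eP Y) * z - W12_ww M Y V m t * z^2 / 2
                - W0e_www M Y V \<epsilon> m t * z^3 / 6)))"

lemma Ptil_eq_Ptil_right:
  assumes "0 < t" "M * t < x" "x < 1" "0 < \<epsilon>"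
  shows "Ptil M Y V \<epsilon> x t = Ptil_right M Y V \<epsilon> x t"
  using assms
  by (simp add: Ptil_def Ptil_right_def Let_def sel_def y0o_def y1o_def dxy0_def deriv_inner_terms fP_def)
     (simp add: algebra_simps)

text \<open>For fixed \<open>x\<close>, both \<open>w\<close> and \<open>M \<tau>\<close> tend to positive limits as \<open>t \<rightarrow> 0+\<close>, so each inner term tends
  to its \<open>+\<close> polynomial and all corrections cancel, except \<open>-a\<^sub>0 \<rightarrow> -y\<^sub>0(1)\<close> and
  \<open>\<epsilon> B z \<rightarrow> -(1 - x) y\<^sub>0'(1)\<close> in the boundary layer.\<close>

lemma tendsto_Ptil_right:
  assumes M: "0 < M" and \<epsilon>: "0 < \<epsilon>" and Y: "C4_on {0..1} Y" and x: "0 < x" "x < 1"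
  shows "((\<lambda>t. Ptil_right M Y V \<epsilon> x t)
           \<longlongrightarrow> Y 0 x - exp (- M * ((1 - x) / \<epsilon>)) * (Y 0 1 + (1 - x) * Y 1 1)) (at_right 0)"
proof -
  define w where "w t = (x - M * t) / sqrt \<epsilon>" for t
  define m where "m t = M * ((1 / M - t) / sqrt \<epsilon>)" for t
  have w: "(w \<longlongrightarrow> x / sqrt \<epsilon>) (at_right 0)" "0 < x / sqrt \<epsilon>"
    unfolding w_def using \<epsilon> x by (auto intro!: tendsto_eq_intros)
  have m: "(m \<longlongrightarrow> 1 / sqrt \<epsilon>) (at_right 0)" "0 < 1 / sqrt \<epsilon>"
    unfolding m_def using M \<epsilon> by (auto intro!: tendsto_eq_intros)
  have Y_lims: "((\<lambda>t. Y k (x - M * t)) \<longlongrightarrow> Y k x) (at_right 0)"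
    "((\<lambda>t. Y k (1 - M * t)) \<longlongrightarrow> Y k 1) (at_right 0)" if "k < 4" for k
    using that x by (auto intro: tendsto_C4_on_shift[OF Y _ _ _ M])
  note lims = tendsto_ident_at w(1) m(1) Y_lims[of 0] Y_lims[of 1] Y_lims[of 2]
    tendsto_W0e_terms[OF w M \<epsilon>] tendsto_W12_terms[OF w] tendsto_W1_terms[OF w] tendsto_W32[OF w]
    tendsto_W0e_terms[OF m M \<epsilon>] tendsto_W12_terms[OF m] tendsto_W1_terms[OF m] tendsto_W32[OF m]
  show ?thesis
    unfolding Ptil_right_def Let_def w_def[symmetric] m_def[symmetric]
    by (rule lims tendsto_eq_intros refl | (simp; fail))+ (use \<epsilon> x in \<open>simp add: field_simps\<close>)
qed

lemma Ptil0_eq: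
  assumes "0 < M" "0 < \<epsilon>" "C4_on {0..1} Y" "0 < x" "x < 1"
  shows "Ptil0 M Y V \<epsilon> x = Y 0 x - exp (- M * ((1 - x) / \<epsilon>)) * (Y 0 1 + (1 - x) * Y 1 1)"
  unfolding Ptil0_def
proof (rule tendsto_Lim)
  have "eventually (\<lambda>t. t < x / M) (at_right (0::real))"
    unfolding eventually_at_right_field using assms by (intro exI[of _ "x / M"]) auto
  with eventually_at_right_less[of 0] have "eventually (\<lambda>t. Ptil_right M Y V \<epsilon> x t = Ptil M Y V \<epsilon> x t) (at_right 0)"
    by eventually_elim (use assms in \<open>simp add: Ptil_eq_Ptil_right field_simps\<close>)
  with tendsto_Ptil_right[OF assms]
  show "((\<lambda>t. Ptil M Y V \<epsilon> x t) \<longlongrightarrow> Y 0 x - exp (- M * ((1 - x) / \<epsilon>)) * (Y 0 1 + (1 - x) * Y 1 1)) (at_right 0)"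
    by (rule Lim_transform_eventually)
qed simp

section \<open>Heat subsolutions vanishing on the boundary\<close>

lemma continuous_on_slice_fst:
  assumes "continuous_on (A \<times> B) (\<lambda>(x, t). F x t)" "x \<in> A"
  shows "continuous_on B (F x)"
  using continuous_on_compose_Pair[OF assms(1) continuous_on_const continuous_on_id] assms(2) by simp

lemma continuous_on_slice_snd:
  assumes "continuous_on (A \<times> B) (\<lambda>(x, t). F x t)" "t \<in> B"
  shows "continuous_on A (\<lambda>x. F x t)"
  using continuous_on_compose_Pair[OF assms(1) continuous_on_id continuous_on_const] assms(2) by simp

lemma has_real_derivative_integral_param:
  fixes F F' :: "real \<Rightarrow> real \<Rightarrow> real"
  assumes "x \<in> U" "convex U"
    and "\<And>y t. y \<in> U \<Longrightarrow> t \<in> {c..d} \<Longrightarrow> ((\<lambda>y. F y t) has_real_derivative F' y t) (at y within U)"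
    and "continuous_on (U \<times> {c..d}) (\<lambda>(y, t). F y t)"
    and "continuous_on (U \<times> {c..d}) (\<lambda>(y, t). F' y t)"
  shows "((\<lambda>y. integral {c..d} (F y)) has_real_derivative integral {c..d} (F' x)) (at x within U)"
  using leibniz_rule_field_derivative[of U c d F F' x] assms
  by (auto intro: integrable_continuous_interval continuous_on_slice_fst[OF assms(4)])

lemma integral_le_integral_subinterval:
  fixes f :: "real \<Rightarrow> real"
  assumes f: "continuous_on {c..d} f" "\<And>x. x \<in> {c..d} \<Longrightarrow> \<bar>f x\<bar> \<le> B"
    and "c \<le> a" "a \<le> b" "b \<le> d"
  shows "integral {c..d} f \<le> integral {a..b} f + B * ((a - c) + (d - b))"
proof -
  have int: "f integrable_on {u..v}" if "c \<le> u" "v \<le> d" for u v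
    by (rule integrable_continuous_interval, rule continuous_on_subset[OF f(1)]) (use that in auto)
  have piece: "integral {u..v} f \<le> B * (v - u)" if "c \<le> u" "u \<le> v" "v \<le> d" for u v
  proof -
    have "integral {u..v} f \<le> integral {u..v} (\<lambda>_. B)"
      by (rule integral_le) (use int f(2) that in \<open>auto simp: abs_le_iff\<close>)
    then show ?thesis using that by (simp add: mult.commute)
  qed
  have "integral {c..a} f + integral {a..d} f = integral {c..d} f"
    using assms int by (intro Henstock_Kurzweil_Integration.integral_combine) auto
  moreover have "integral {a..b} f + integral {b..d} f = integral {a..d} f"
    using assms int by (intro Henstock_Kurzweil_Integration.integral_combine) auto
  ultimately show ?thesis
    using piece[of c a] piece[of b d] assms by (simp add: algebra_simps)
qed

lemma nonneg_vanishing_endpoints_slopes: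
  fixes S S' :: "real \<Rightarrow> real"
  assumes S: "continuous_on {0..1} S" "\<And>x. x \<in> {0<..<1} \<Longrightarrow> (S has_real_derivative S' x) (at x)"
    and S_nonneg: "\<And>x. x \<in> {0..1} \<Longrightarrow> 0 \<le> S x" and "S 0 = 0" "S 1 = 0"
    and \<delta>: "0 < \<delta>" "\<delta> < 1"
  shows "\<exists>a\<in>{0<..<\<delta>}. 0 \<le> S' a" and "\<exists>b\<in>{1 - \<delta><..<1}. S' b \<le> 0"
proof -
  have mvt: "\<exists>z\<in>{u<..<v}. S v - S u = (v - u) * S' z" if "0 \<le> u" "u < v" "v \<le> 1" for u v
  proof -
    have cont: "continuous_on {u..v} S"
      using that by (intro continuous_on_subset[OF S(1)]) auto
    have dif: "S differentiable (at x)" if "u < x" "x < v" for x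
      using S(2)[of x] that \<open>0 \<le> u\<close> \<open>v \<le> 1\<close> by (auto simp: real_differentiable_def)
    obtain l z where z: "u < z" "z < v" "(S has_real_derivative l) (at z)" "S v - S u = (v - u) * l"
      using MVT[OF \<open>u < v\<close> cont dif] by blast
    then have "l = S' z"
      using S(2) that by (auto intro: DERIV_unique)
    with z show ?thesis by auto
  qed
  obtain a where a: "a \<in> {0<..<\<delta>}" "S \<delta> - S 0 = (\<delta> - 0) * S' a"
    using mvt[of 0 \<delta>] \<delta> by auto
  have "0 \<le> \<delta> * S' a"
    using a(2) S_nonneg[of \<delta>] \<delta> \<open>S 0 = 0\<close> by simp
  with a(1) \<delta> show "\<exists>a\<in>{0<..<\<delta>}. 0 \<le> S' a"
    by (auto simp: zero_le_mult_iff)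
  obtain b where b: "b \<in> {1 - \<delta><..<1}" "S 1 - S (1 - \<delta>) = (1 - (1 - \<delta>)) * S' b"
    using mvt[of "1 - \<delta>" 1] \<delta> by auto
  have "\<delta> * S' b \<le> 0"
    using b(2) S_nonneg[of "1 - \<delta>"] \<delta> \<open>S 1 = 0\<close> by simp
  with b(1) \<delta> show "\<exists>b\<in>{1 - \<delta><..<1}. S' b \<le> 0"
    by (auto simp: mult_le_0_iff)
qed

lemma subsolution_integral_gain_le_flux:
  fixes R Rx Rxx Rt :: "real \<Rightarrow> real \<Rightarrow> real"
  assumes "t1 \<le> t2" "a \<le> b"
    and R_cont: "continuous_on ({a..b} \<times> {t1..t2}) (\<lambda>(x, t). R x t)"
    and Rx_cont: "continuous_on ({a..b} \<times> {t1..t2}) (\<lambda>(x, t). Rx x t)"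
    and Rxx_cont: "continuous_on ({a..b} \<times> {t1..t2}) (\<lambda>(x, t). Rxx x t)"
    and Rx_x: "\<And>x t. x \<in> {a..b} \<Longrightarrow> t \<in> {t1..t2} \<Longrightarrow> ((\<lambda>y. Rx y t) has_real_derivative Rxx x t) (at x within {a..b})"
    and R_t: "\<And>x t. x \<in> {a..b} \<Longrightarrow> t \<in> {t1..t2} \<Longrightarrow> ((\<lambda>s. R x s) has_real_derivative Rt x t) (at t within {t1..t2})"
    and sub: "\<And>x t. x \<in> {a..b} \<Longrightarrow> t \<in> {t1..t2} \<Longrightarrow> Rt x t \<le> \<epsilon> * Rxx x t"
  shows "integral {a..b} (\<lambda>x. R x t2 - R x t1) \<le> \<epsilon> * (integral {t1..t2} (Rx b) - integral {t1..t2} (Rx a))"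
proof -
  have pointwise: "R x t2 - R x t1 \<le> \<epsilon> * integral {t1..t2} (Rxx x)" if "x \<in> {a..b}" for x
  proof (rule has_integral_le)
    show "((\<lambda>t. Rt x t) has_integral R x t2 - R x t1) {t1..t2}"
      using R_t that \<open>t1 \<le> t2\<close>
      by (intro fundamental_theorem_of_calculus) (auto simp flip: has_real_derivative_iff_has_vector_derivative)
    show "((\<lambda>t. \<epsilon> * Rxx x t) has_integral \<epsilon> * integral {t1..t2} (Rxx x)) {t1..t2}"
      using continuous_on_slice_fst[OF Rxx_cont that]
      by (intro has_integral_mult_right integrable_integral integrable_continuous_interval)
  qed (use sub that in auto)
  have "((\<lambda>x. \<epsilon> * integral {t1..t2} (Rxx x)) has_integral \<epsilon> * (integral {t1..t2} (Rx b) - integral {t1..t2} (Rx a))) {a..b}"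
    using \<open>a \<le> b\<close> Rx_x Rx_cont Rxx_cont
    by (intro has_integral_mult_right fundamental_theorem_of_calculus)
       (auto simp flip: has_real_derivative_iff_has_vector_derivative intro!: has_real_derivative_integral_param)
  moreover have "(\<lambda>x. R x t2 - R x t1) integrable_on {a..b}"
    using assms by (intro integrable_continuous_interval continuous_intros continuous_on_slice_snd[OF R_cont]) auto
  ultimately show ?thesis
    by (intro has_integral_le[OF integrable_integral]) (use pointwise in auto)
qed

locale heat_subsolution =
  fixes R Rx Rxx Rt :: "real \<Rightarrow> real \<Rightarrow> real" and \<epsilon> t1 t2 :: real
  assumes diffusivity_nonneg: "0 \<le> \<epsilon>" and t1_le_t2: "t1 \<le> t2"
    and R_cont: "continuous_on ({0..1} \<times> {t1..t2}) (\<lambda>(x, t). R x t)"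
    and Rx_cont: "continuous_on ({0<..<1} \<times> {t1..t2}) (\<lambda>(x, t). Rx x t)"
    and Rxx_cont: "continuous_on ({0<..<1} \<times> {t1..t2}) (\<lambda>(x, t). Rxx x t)"
    and R_x: "\<And>x t. x \<in> {0<..<1} \<Longrightarrow> t \<in> {t1..t2} \<Longrightarrow> ((\<lambda>y. R y t) has_real_derivative Rx x t) (at x)"
    and Rx_x: "\<And>x t. x \<in> {0<..<1} \<Longrightarrow> t \<in> {t1..t2} \<Longrightarrow> ((\<lambda>y. Rx y t) has_real_derivative Rxx x t) (at x)"
    and R_t: "\<And>x t. x \<in> {0<..<1} \<Longrightarrow> t \<in> {t1..t2} \<Longrightarrow> ((\<lambda>s. R x s) has_real_derivative Rt x t) (at t within {t1..t2})"
    and subsolution: "\<And>x t. x \<in> {0<..<1} \<Longrightarrow> t \<in> {t1..t2} \<Longrightarrow> Rt x t \<le> \<epsilon> * Rxx x t"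
    and nonneg: "\<And>x t. x \<in> {0..1} \<Longrightarrow> t \<in> {t1..t2} \<Longrightarrow> 0 \<le> R x t"
    and boundary: "\<And>t. t \<in> {t1..t2} \<Longrightarrow> R 0 t = 0 \<and> R 1 t = 0"
begin

lemma time_integral_continuous: "continuous_on {0..1} (\<lambda>x. integral {t1..t2} (R x))"
  using integral_continuous_on_param[OF R_cont[unfolded cbox_interval[symmetric]]] by simp

lemma time_integral_has_derivative:
  assumes "x \<in> {0<..<1}"
  shows "((\<lambda>x. integral {t1..t2} (R x)) has_real_derivative integral {t1..t2} (Rx x)) (at x)"
proof -
  have "((\<lambda>x. integral {t1..t2} (R x)) has_real_derivative integral {t1..t2} (Rx x)) (at x within {0<..<1})"
  proof (rule has_real_derivative_integral_param[OF assms _ _ _ Rx_cont])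
    show "continuous_on ({0<..<1} \<times> {t1..t2}) (\<lambda>(x, t). R x t)"
      by (rule continuous_on_subset[OF R_cont]) auto
  qed (auto simp: convex_real_interval intro: R_x[THEN has_field_derivative_at_within])
  moreover have "at x within {0<..<1} = at x"
    using assms by (intro at_within_open) auto
  ultimately show ?thesis by simp
qed

lemma time_integral_nonneg: "x \<in> {0..1} \<Longrightarrow> 0 \<le> integral {t1..t2} (R x)"
  using integrable_continuous_interval[OF continuous_on_slice_fst[OF R_cont]] nonneg
  by (auto intro: integral_nonneg)

lemma time_integral_boundary: "integral {t1..t2} (R 0) = 0" "integral {t1..t2} (R 1) = 0"
  using boundary integral_cong[of "{t1..t2}" "R 0" "\<lambda>_. 0"] integral_cong[of "{t1..t2}" "R 1" "\<lambda>_. 0"]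
  by auto

lemma mass_difference_continuous: "continuous_on {0..1} (\<lambda>x. R x t2 - R x t1)"
  using t1_le_t2 by (intro continuous_intros continuous_on_slice_snd[OF R_cont]) auto

lemma mass_gain_le_flux:
  assumes "0 < a" "a \<le> b" "b < 1"
  shows "integral {a..b} (\<lambda>x. R x t2 - R x t1) \<le> \<epsilon> * (integral {t1..t2} (Rx b) - integral {t1..t2} (Rx a))"
proof (rule subsolution_integral_gain_le_flux[where Rt = Rt])
  have "{a..b} \<times> {t1..t2} \<subseteq> {0<..<1} \<times> {t1..t2}" using assms by auto
  then show "continuous_on ({a..b} \<times> {t1..t2}) (\<lambda>(x, t). Rx x t)"
    and "continuous_on ({a..b} \<times> {t1..t2}) (\<lambda>(x, t). Rxx x t)"
    by (auto intro: continuous_on_subset[OF Rx_cont] continuous_on_subset[OF Rxx_cont])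
  show "continuous_on ({a..b} \<times> {t1..t2}) (\<lambda>(x, t). R x t)"
    by (rule continuous_on_subset[OF R_cont]) (use assms in auto)
  fix x t assume "x \<in> {a..b}" "t \<in> {t1..t2}"
  then have x: "x \<in> {0<..<1}" using assms by auto
  show "((\<lambda>y. Rx y t) has_real_derivative Rxx x t) (at x within {a..b})"
    using Rx_x[OF x \<open>t \<in> {t1..t2}\<close>] by (rule has_field_derivative_at_within)
  show "((\<lambda>s. R x s) has_real_derivative Rt x t) (at t within {t1..t2})"
    by (rule R_t[OF x \<open>t \<in> {t1..t2}\<close>])
  show "Rt x t \<le> \<epsilon> * Rxx x t"
    by (rule subsolution[OF x \<open>t \<in> {t1..t2}\<close>])
qed (use assms t1_le_t2 in auto)

text \<open>\<open>S x = \<integral>\<^sub>t\<^sub>1\<^sup>t\<^sup>2 R x t dt\<close> is nonnegative and vanishes at \<open>x = 0, 1\<close>, so \<open>S'\<close> is nonnegative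
  somewhere in \<open>(0, \<delta>)\<close> and nonpositive somewhere in \<open>(1 - \<delta>, 1)\<close>; between two such points the
  gain of mass is at most \<open>\<epsilon> (S' b - S' a) \<le> 0\<close>. This needs no regularity of \<open>R\<^sub>x\<close> up to the
  boundary.\<close>

lemma mass_gain_le:
  assumes \<delta>: "0 < \<delta>" "\<delta> \<le> 1/2" and B: "\<And>x. x \<in> {0..1} \<Longrightarrow> \<bar>R x t2 - R x t1\<bar> \<le> B"
  shows "integral {0..1} (\<lambda>x. R x t2 - R x t1) \<le> 2 * B * \<delta>"
proof -
  note S = time_integral_continuous time_integral_has_derivative time_integral_nonneg time_integral_boundary
  obtain a where a: "a \<in> {0<..<\<delta>}" "0 \<le> integral {t1..t2} (Rx a)"
    using nonneg_vanishing_endpoints_slopes(1)[OF S, of \<delta>] \<delta> by auto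
  obtain b where b: "b \<in> {1 - \<delta><..<1}" "integral {t1..t2} (Rx b) \<le> 0"
    using nonneg_vanishing_endpoints_slopes(2)[OF S, of \<delta>] \<delta> by auto
  have "integral {a..b} (\<lambda>x. R x t2 - R x t1) \<le> \<epsilon> * (integral {t1..t2} (Rx b) - integral {t1..t2} (Rx a))"
    using a(1) b(1) \<delta> by (intro mass_gain_le_flux) auto
  also have "\<dots> \<le> 0"
    using a(2) b(2) diffusivity_nonneg by (simp add: mult_nonneg_nonpos)
  finally have "integral {a..b} (\<lambda>x. R x t2 - R x t1) \<le> 0" .
  moreover have "integral {0..1} (\<lambda>x. R x t2 - R x t1)
      \<le> integral {a..b} (\<lambda>x. R x t2 - R x t1) + B * ((a - 0) + (1 - b))"
    using mass_difference_continuous B a(1) b(1) \<delta> by (intro integral_le_integral_subinterval) auto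
  moreover have "B * ((a - 0) + (1 - b)) \<le> B * (2 * \<delta>)"
    using a(1) b(1) B[of 0] by (intro mult_left_mono) auto
  ultimately show ?thesis by simp
qed

lemma integral_antimono: "integral {0..1} (\<lambda>x. R x t2) \<le> integral {0..1} (\<lambda>x. R x t1)"
proof -
  obtain B where "\<forall>y\<in>(\<lambda>x. R x t2 - R x t1) ` {0..1}. norm y \<le> B"
    using compact_imp_bounded[OF compact_continuous_image[OF mass_difference_continuous compact_Icc]]
    unfolding bounded_iff by blast
  then have B: "\<And>x. x \<in> {0..1} \<Longrightarrow> \<bar>R x t2 - R x t1\<bar> \<le> B" by auto
  have "integral {0..1} (\<lambda>x. R x t2 - R x t1) \<le> 0"
  proof (rule field_le_epsilon)
    fix e :: real assume "0 < e"
    define \<delta> where "\<delta> = min (1/2) (e / (2 * (\<bar>B\<bar> + 1)))"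
    have "0 < \<delta>" using \<open>0 < e\<close> unfolding \<delta>_def by (simp add: add_nonneg_pos)
    moreover have "\<delta> \<le> 1/2" unfolding \<delta>_def by (rule min.cobounded1)
    moreover have "2 * B * \<delta> \<le> 2 * (\<bar>B\<bar> + 1) * (e / (2 * (\<bar>B\<bar> + 1)))"
      using \<open>0 < \<delta>\<close> B[of 0] by (intro mult_mono) (auto simp: \<delta>_def)
    ultimately show "integral {0..1} (\<lambda>x. R x t2 - R x t1) \<le> 0 + e"
      using mass_gain_le[OF _ _ B] by fastforce
  qed
  moreover have "integral {0..1} (\<lambda>x. R x t2 - R x t1) = integral {0..1} (\<lambda>x. R x t2) - integral {0..1} (\<lambda>x. R x t1)"
    using t1_le_t2 by (intro integral_diff integrable_continuous_interval continuous_on_slice_snd[OF R_cont]) auto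
  ultimately show ?thesis by simp
qed

end

section \<open>Energy estimate for the error\<close>

definition weighted_energy :: "real \<Rightarrow> real \<Rightarrow> (real \<Rightarrow> real \<Rightarrow> real) \<Rightarrow> real \<Rightarrow> real" where
  "weighted_energy M \<epsilon> \<theta> t =
     exp (M^2 / (2 * \<epsilon>) * t) * integral {0..1} (\<lambda>x. exp (- (M / \<epsilon>) * x) * (\<theta> x t)^2)"

text \<open>With \<open>m = M / \<epsilon>\<close>, the weighted square \<open>R = exp (M\<^sup>2 t / (2 \<epsilon>) - m x) \<theta>\<^sup>2\<close> of a solution
  satisfies \<open>\<epsilon> R\<^sub>x\<^sub>x - R\<^sub>t = 2 \<epsilon> exp (M\<^sup>2 t / (2 \<epsilon>) - m x) (\<theta>\<^sub>x - m \<theta> / 2)\<^sup>2 \<ge> 0\<close>.\<close>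

lemma is_solution_weighted_energy_antimono:
  fixes \<theta> :: "real \<Rightarrow> real \<Rightarrow> real"
  assumes "0 < \<epsilon>" "is_solution M \<epsilon> T \<theta>0 \<theta>" "0 < t1" "t1 \<le> t2" "t2 < T"
  shows "weighted_energy M \<epsilon> \<theta> t2 \<le> weighted_energy M \<epsilon> \<theta> t1"
proof -
  obtain \<theta>x \<theta>xx \<theta>t where
    pde: "\<And>x t. x \<in> {0<..<1} \<Longrightarrow> t \<in> {0<..<T} \<Longrightarrow>
          ((\<lambda>y. \<theta> y t) has_real_derivative \<theta>x x t) (at x) \<and>
          ((\<lambda>y. \<theta>x y t) has_real_derivative \<theta>xx x t) (at x) \<and>
          ((\<lambda>s. \<theta> x s) has_real_derivative \<theta>t x t) (at t) \<and>
          \<theta>t x t + M * \<theta>x x t - \<epsilon> * \<theta>xx x t = 0"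
    and \<theta>x_cont: "continuous_on ({0<..<1} \<times> {0<..<T}) (\<lambda>(x, t). \<theta>x x t)"
    and \<theta>xx_cont: "continuous_on ({0<..<1} \<times> {0<..<T}) (\<lambda>(x, t). \<theta>xx x t)"
    and \<theta>_cont: "continuous_on ({0..1} \<times> {0<..T}) (\<lambda>(x, t). \<theta> x t)"
    and boundary: "\<And>t. t \<in> {0<..T} \<Longrightarrow> \<theta> 0 t = 0 \<and> \<theta> 1 t = 0"
    using assms(2) unfolding is_solution_def by blast
  define m where "m = M / \<epsilon>"
  define w where "w x t = exp (M^2 / (2 * \<epsilon>) * t) * exp (- m * x)" for x t
  define R where "R x t = w x t * (\<theta> x t)^2" for x t
  define Rx where "Rx x t = w x t * (- m * (\<theta> x t)^2 + 2 * \<theta> x t * \<theta>x x t)" for x t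
  define Rxx where "Rxx x t = w x t * (m^2 * (\<theta> x t)^2 - 4 * m * \<theta> x t * \<theta>x x t
    + 2 * (\<theta>x x t)^2 + 2 * \<theta> x t * \<theta>xx x t)" for x t
  define Rt where "Rt x t = w x t * (M^2 / (2 * \<epsilon>) * (\<theta> x t)^2 + 2 * \<theta> x t * \<theta>t x t)" for x t
  have interval: "{t1..t2} \<subseteq> {0<..<T}" using assms by auto
  have "integral {0..1} (\<lambda>x. R x t2) \<le> integral {0..1} (\<lambda>x. R x t1)"
  proof (rule heat_subsolution.integral_antimono[where Rx = Rx and Rxx = Rxx and Rt = Rt and \<epsilon> = \<epsilon>], unfold_locales)
    have sub: "{0..1} \<times> {t1..t2} \<subseteq> {0..1} \<times> {0<..T}" "{0<..<1} \<times> {t1..t2} \<subseteq> {0<..<1::real} \<times> {0<..<T}"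
      using interval by auto
    have "continuous_on ({0..1} \<times> {t1..t2}) (\<lambda>(x, t). \<theta> x t)"
      using continuous_on_subset[OF \<theta>_cont sub(1)] .
    moreover have "continuous_on ({0<..<1} \<times> {t1..t2}) (\<lambda>(x, t). \<theta>x x t)"
      using continuous_on_subset[OF \<theta>x_cont sub(2)] .
    moreover have "continuous_on ({0<..<1} \<times> {t1..t2}) (\<lambda>(x, t). \<theta>xx x t)"
      using continuous_on_subset[OF \<theta>xx_cont sub(2)] .
    moreover from calculation(1) have "continuous_on ({0<..<1} \<times> {t1..t2}) (\<lambda>(x, t). \<theta> x t)"
      by (rule continuous_on_subset) auto
    ultimately show "continuous_on ({0..1} \<times> {t1..t2}) (\<lambda>(x, t). R x t)"
      and "continuous_on ({0<..<1} \<times> {t1..t2}) (\<lambda>(x, t). Rx x t)"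
      and "continuous_on ({0<..<1} \<times> {t1..t2}) (\<lambda>(x, t). Rxx x t)"
      unfolding R_def Rx_def Rxx_def w_def case_prod_beta using \<open>0 < \<epsilon>\<close>
      by (auto intro!: continuous_intros)
  next
    fix x t :: real assume "x \<in> {0<..<1}" "t \<in> {t1..t2}"
    then have xt: "x \<in> {0<..<1}" "t \<in> {0<..<T}" using interval by auto
    note d = pde[OF xt]
    show "((\<lambda>y. R y t) has_real_derivative Rx x t) (at x)"
      unfolding R_def Rx_def w_def
      by (rule derivative_eq_intros conjunct1[OF d] refl | simp)+ (simp add: algebra_simps)
    show "((\<lambda>y. Rx y t) has_real_derivative Rxx x t) (at x)"
      unfolding Rx_def Rxx_def w_def
      by (rule derivative_eq_intros conjunct1[OF d] conjunct1[OF conjunct2[OF d]] refl | simp)+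
         (simp add: algebra_simps power2_eq_square)
    have "((\<lambda>s. R x s) has_real_derivative Rt x t) (at t)"
      unfolding R_def Rt_def w_def
      by (rule derivative_eq_intros conjunct1[OF conjunct2[OF conjunct2[OF d]]] refl | simp)+
         (simp add: algebra_simps)
    then show "((\<lambda>s. R x s) has_real_derivative Rt x t) (at t within {t1..t2})"
      by (rule has_field_derivative_at_within)
    have \<theta>t: "\<theta>t x t = \<epsilon> * \<theta>xx x t - M * \<theta>x x t" using d by linarith
    have "\<epsilon> * Rxx x t - Rt x t = w x t * (2 * \<epsilon> * (\<theta>x x t - m / 2 * \<theta> x t)^2)"
      unfolding Rxx_def Rt_def m_def \<theta>t using \<open>0 < \<epsilon>\<close> by (simp add: field_simps power2_eq_square)
    moreover have "0 \<le> w x t * (2 * \<epsilon> * (\<theta>x x t - m / 2 * \<theta> x t)^2)"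
      using \<open>0 < \<epsilon>\<close> by (simp add: w_def)
    ultimately show "Rt x t \<le> \<epsilon> * Rxx x t" by linarith
  qed (use assms boundary in \<open>auto simp: R_def w_def\<close>)
  then show ?thesis
    by (simp add: weighted_energy_def R_def w_def m_def mult.assoc)
qed

lemma set_integral_01_eq_integral:
  fixes f g :: "real \<Rightarrow> real"
  assumes "\<And>x. x \<in> {0<..<1} \<Longrightarrow> f x = g x" "continuous_on {0..1} g"
  shows "(LINT x:{0..1}|lborel. f x) = integral {0..1} g"
proof -
  have "(LINT x:{0..1}|lborel. f x) = (LINT x:{0<..<1}|lborel. f x)"
    by (rule set_integral_discrete_difference[where X = "{0, 1}"]) auto
  also have "\<dots> = (LINT x:{0<..<1}|lborel. g x)"
    by (rule set_lebesgue_integral_cong) (use assms in auto)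
  also have "\<dots> = (LINT x:{0..1}|lborel. g x)"
    by (rule set_integral_discrete_difference[where X = "{0, 1}"]) auto
  also have "\<dots> = integral {0..1} g"
    by (rule set_borel_integral_eq_integral(2)[OF borel_integrable_atLeastAtMost'[OF assms(2)]])
  finally show ?thesis .
qed

lemma integral_weighted_square_le:
  fixes f g w :: "real \<Rightarrow> real"
  assumes "continuous_on {0..1} f" "continuous_on {0..1} g" "continuous_on {0..1} w"
    and w: "\<And>x. x \<in> {0..1} \<Longrightarrow> 0 \<le> w x \<and> w x \<le> 1"
  shows "integral {0..1} (\<lambda>x. w x * (f x)^2)
    \<le> 2 * integral {0..1} (\<lambda>x. w x * (g x)^2) + 2 * integral {0..1} (\<lambda>x. (f x - g x)^2)"
proof -
  have int: "(\<lambda>x. w x * (g x)^2) integrable_on {0..1}" "(\<lambda>x. (f x - g x)^2) integrable_on {0..1}"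
    using assms by (auto intro!: integrable_continuous_interval continuous_intros)
  have "integral {0..1} (\<lambda>x. w x * (f x)^2)
      \<le> integral {0..1} (\<lambda>x. 2 * (w x * (g x)^2) + 2 * (f x - g x)^2)"
  proof (rule integral_le)
    fix x :: real assume "x \<in> {0..1}"
    have "(f x)^2 \<le> 2 * (g x)^2 + 2 * (f x - g x)^2"
      using zero_le_power2[of "2 * g x - f x"] by (simp add: power2_eq_square algebra_simps)
    then have "w x * (f x)^2 \<le> w x * (2 * (g x)^2 + 2 * (f x - g x)^2)"
      using w[OF \<open>x \<in> {0..1}\<close>] by (intro mult_left_mono) auto
    also have "\<dots> \<le> 2 * (w x * (g x)^2) + 2 * (f x - g x)^2"
      using w[OF \<open>x \<in> {0..1}\<close>] mult_left_le_one_le[of "(f x - g x)^2" "w x"]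
      by (simp add: algebra_simps)
    finally show "w x * (f x)^2 \<le> 2 * (w x * (g x)^2) + 2 * (f x - g x)^2" .
  qed (use assms int in \<open>auto intro!: integrable_continuous_interval continuous_intros\<close>)
  also have "\<dots> = 2 * integral {0..1} (\<lambda>x. w x * (g x)^2) + 2 * integral {0..1} (\<lambda>x. (f x - g x)^2)"
    using int by (simp add: integral_add)
  finally show ?thesis .
qed

lemma is_solution_slice_continuous:
  assumes "is_solution M \<epsilon> T \<theta>0 \<theta>" "t \<in> {0<..T}"
  shows "continuous_on {0..1} (\<lambda>x. \<theta> x t)"
  using assms unfolding is_solution_def by (auto intro: continuous_on_slice_snd)

lemma weighted_energy_le_initial:
  fixes \<theta> :: "real \<Rightarrow> real \<Rightarrow> real" and g :: "real \<Rightarrow> real"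
  assumes "0 < M" "0 < \<epsilon>" and sol: "is_solution M \<epsilon> T \<theta>0 \<theta>"
    and datum: "\<And>x. x \<in> {0<..<1} \<Longrightarrow> \<theta>0 x = g x" and g: "continuous_on {0..1} g"
    and "0 < t" "t \<le> T"
  shows "weighted_energy M \<epsilon> \<theta> t \<le> exp (M^2 / (2 * \<epsilon>) * t) *
    (2 * integral {0..1} (\<lambda>x. exp (- (M / \<epsilon>) * x) * (g x)^2)
     + 2 * (LINT x:{0..1}|lborel. (\<theta> x t - \<theta>0 x)^2))"
proof -
  have \<theta>_cont: "continuous_on {0..1} (\<lambda>x. \<theta> x t)"
    using is_solution_slice_continuous[OF sol] assms by auto
  have "integral {0..1} (\<lambda>x. exp (- (M / \<epsilon>) * x) * (\<theta> x t)^2)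
    \<le> 2 * integral {0..1} (\<lambda>x. exp (- (M / \<epsilon>) * x) * (g x)^2) + 2 * integral {0..1} (\<lambda>x. (\<theta> x t - g x)^2)"
    using \<theta>_cont g \<open>0 < M\<close> \<open>0 < \<epsilon>\<close>
    by (intro integral_weighted_square_le) (auto intro!: continuous_intros)
  also have "integral {0..1} (\<lambda>x. (\<theta> x t - g x)^2) = (LINT x:{0..1}|lborel. (\<theta> x t - \<theta>0 x)^2)"
    using datum \<theta>_cont g by (intro set_integral_01_eq_integral[symmetric]) (auto intro!: continuous_intros)
  finally show ?thesis
    unfolding weighted_energy_def by (intro mult_left_mono) auto
qed

lemma weighted_energy_tendsto_at_left:
  assumes "0 < \<epsilon>" "is_solution M \<epsilon> T \<theta>0 \<theta>" "0 < T"
  shows "(weighted_energy M \<epsilon> \<theta> \<longlongrightarrow> weighted_energy M \<epsilon> \<theta> T) (at_left T)"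
proof -
  have "continuous_on ({0..1} \<times> {0<..T}) (\<lambda>(x, r). \<theta> x r)"
    using assms(2) unfolding is_solution_def by blast
  then have "continuous_on ({T / 2..T} \<times> {0..1}) (\<lambda>p. \<theta> (snd p) (fst p))"
    using continuous_on_compose_Pair[OF _ continuous_on_snd[OF continuous_on_id']
        continuous_on_fst[OF continuous_on_id']] assms(3)
    by fastforce
  then have "continuous_on {T / 2..T} (\<lambda>r. integral (cbox 0 1) (\<lambda>x. exp (- (M / \<epsilon>) * x) * (\<theta> x r)^2))"
    using \<open>0 < \<epsilon>\<close> by (intro integral_continuous_on_param) (auto simp: case_prod_beta intro!: continuous_intros)
  then have "continuous_on {T / 2..T} (weighted_energy M \<epsilon> \<theta>)"
    unfolding weighted_energy_def[abs_def] using \<open>0 < \<epsilon>\<close> by (auto intro!: continuous_intros)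
  from continuous_on_Icc_at_leftD[OF this] assms(3) show ?thesis
    by simp
qed

lemma is_solution_weighted_energy_le:
  fixes \<theta> :: "real \<Rightarrow> real \<Rightarrow> real" and g :: "real \<Rightarrow> real"
  assumes "0 < M" "0 < \<epsilon>" and sol: "is_solution M \<epsilon> T \<theta>0 \<theta>"
    and datum: "\<And>x. x \<in> {0<..<1} \<Longrightarrow> \<theta>0 x = g x" and g: "continuous_on {0..1} g"
    and "0 < s" "s \<le> T"
  shows "weighted_energy M \<epsilon> \<theta> s \<le> 2 * integral {0..1} (\<lambda>x. exp (- (M / \<epsilon>) * x) * (g x)^2)"
    (is "_ \<le> 2 * ?I")
proof -
  define bound where "bound t = exp (M^2 / (2 * \<epsilon>) * t) * (2 * ?I + 2 * (LINT x:{0..1}|lborel. (\<theta> x t - \<theta>0 x)^2))" for t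
  have below_T: "weighted_energy M \<epsilon> \<theta> r \<le> 2 * ?I" if "0 < r" "r < T" for r
  proof (rule tendsto_le[OF trivial_limit_at_right_real _ tendsto_const])
    have "(bound \<longlongrightarrow> exp (M^2 / (2 * \<epsilon>) * 0) * (2 * ?I + 2 * 0)) (at_right 0)"
      using sol unfolding bound_def[abs_def] is_solution_def by (intro tendsto_intros) auto
    then show "(bound \<longlongrightarrow> 2 * ?I) (at_right 0)"
      by simp
    have "eventually (\<lambda>t. t < r) (at_right (0::real))"
      using that unfolding eventually_at_right_field by auto
    with eventually_at_right_less[of 0] show "eventually (\<lambda>t. weighted_energy M \<epsilon> \<theta> r \<le> bound t) (at_right 0)"
    proof eventually_elim
      case (elim t)
      then have "weighted_energy M \<epsilon> \<theta> r \<le> weighted_energy M \<epsilon> \<theta> t"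
        using is_solution_weighted_energy_antimono[OF \<open>0 < \<epsilon>\<close> sol, of t r] that by simp
      also have "\<dots> \<le> bound t"
        unfolding bound_def using weighted_energy_le_initial[OF assms(1-5), of t] elim that by simp
      finally show ?case .
    qed
  qed
  show ?thesis
  proof (cases "s < T")
    case False
    then have "s = T" "0 < T" using assms by auto
    have "eventually (\<lambda>r. T / 2 < r \<and> r < T) (at_left T)"
      using \<open>0 < T\<close> unfolding eventually_at_left_field by (intro exI[of _ "T / 2"]) auto
    then have "eventually (\<lambda>r. weighted_energy M \<epsilon> \<theta> r \<le> 2 * ?I) (at_left T)"
      by eventually_elim (use below_T \<open>0 < T\<close> in auto)
    with weighted_energy_tendsto_at_left[OF \<open>0 < \<epsilon>\<close> sol \<open>0 < T\<close>] show ?thesis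
      using \<open>s = T\<close> by (intro tendsto_le[OF trivial_limit_at_left_real tendsto_const]) auto
  qed (use below_T assms in auto)
qed

lemma integral_square_le_exp_weighted:
  fixes f :: "real \<Rightarrow> real"
  assumes "continuous_on {0..1} f" "0 \<le> m"
  shows "integral {0..1} (\<lambda>x. (f x)^2) \<le> exp m * integral {0..1} (\<lambda>x. exp (- m * x) * (f x)^2)"
proof -
  have "integral {0..1} (\<lambda>x. (f x)^2) \<le> integral {0..1} (\<lambda>x. exp m * (exp (- m * x) * (f x)^2))"
  proof (rule integral_le)
    fix x :: real assume "x \<in> {0..1}"
    then have "1 \<le> exp m * exp (- m * x)"
      using \<open>0 \<le> m\<close> mult_left_le[of x m] by (simp flip: exp_add)
    then show "(f x)^2 \<le> exp m * (exp (- m * x) * (f x)^2)"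
      using mult_right_mono[of 1 "exp m * exp (- m * x)" "(f x)^2"] by (simp add: mult.assoc)
  qed (use assms in \<open>auto intro!: integrable_continuous_interval continuous_intros\<close>)
  then show ?thesis by simp
qed

lemma integral_exp_mult_le:
  fixes a :: real
  assumes "0 < a"
  shows "integral {0..1} (\<lambda>x. exp (a * x)) \<le> exp a / a"
proof -
  have "((\<lambda>x. exp (a * x)) has_integral exp (a * 1) / a - exp (a * 0) / a) {0..1}"
  proof (rule fundamental_theorem_of_calculus)
    fix x :: real assume "x \<in> {0..1}"
    have "((\<lambda>x. exp (a * x) / a) has_real_derivative exp (a * x)) (at x)"
      using assms by (auto intro!: derivative_eq_intros)
    then show "((\<lambda>x. exp (a * x) / a) has_vector_derivative exp (a * x)) (at x within {0..1})"
      by (simp add: has_real_derivative_iff_has_vector_derivative[symmetric] has_field_derivative_at_within)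
  qed simp
  then show ?thesis
    using assms by (simp add: integral_unique)
qed

lemma integral_weighted_layer_square_le:
  fixes g :: "real \<Rightarrow> real"
  assumes "0 < M" "0 < \<epsilon>" "continuous_on {0..1} g"
    and g: "\<And>x. x \<in> {0..1} \<Longrightarrow> \<bar>g x\<bar> \<le> K * exp (- M * ((1 - x) / \<epsilon>))"
  shows "integral {0..1} (\<lambda>x. exp (- (M / \<epsilon>) * x) * (g x)^2) \<le> K^2 * (\<epsilon> / M) * exp (- (M / \<epsilon>))"
proof -
  have "integral {0..1} (\<lambda>x. exp (- (M / \<epsilon>) * x) * (g x)^2)
      \<le> integral {0..1} (\<lambda>x. K^2 * exp (- 2 * (M / \<epsilon>)) * exp ((M / \<epsilon>) * x))"
  proof (rule integral_le)
    fix x :: real assume x: "x \<in> {0..1}"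
    have "(g x)^2 \<le> (K * exp (- M * ((1 - x) / \<epsilon>)))^2"
      using power_mono[OF g[OF x], of 2] by simp
    also have "\<dots> = K^2 * exp (- 2 * (M / \<epsilon>)) * exp ((M / \<epsilon>) * x) * exp ((M / \<epsilon>) * x)"
      using \<open>0 < \<epsilon>\<close> by (simp add: power_mult_distrib power2_eq_square field_simps flip: exp_add)
    finally have "exp (- (M / \<epsilon>) * x) * (g x)^2
        \<le> exp (- (M / \<epsilon>) * x) * (K^2 * exp (- 2 * (M / \<epsilon>)) * exp ((M / \<epsilon>) * x) * exp ((M / \<epsilon>) * x))"
      by (rule mult_left_mono) simp
    also have "\<dots> = K^2 * exp (- 2 * (M / \<epsilon>)) * exp ((M / \<epsilon>) * x)"
      by (simp add: exp_minus field_simps)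
    finally show "exp (- (M / \<epsilon>) * x) * (g x)^2 \<le> K^2 * exp (- 2 * (M / \<epsilon>)) * exp ((M / \<epsilon>) * x)" .
  qed (use assms in \<open>auto intro!: integrable_continuous_interval continuous_intros\<close>)
  also have "\<dots> = K^2 * exp (- 2 * (M / \<epsilon>)) * integral {0..1} (\<lambda>x. exp ((M / \<epsilon>) * x))"
    by simp
  also have "\<dots> \<le> K^2 * exp (- 2 * (M / \<epsilon>)) * (exp (M / \<epsilon>) / (M / \<epsilon>))"
    using assms by (intro mult_left_mono integral_exp_mult_le) auto
  also have "\<dots> = K^2 * (\<epsilon> / M) * exp (- (M / \<epsilon>))"
    using assms by (simp add: field_simps flip: exp_add)
  finally show ?thesis .
qed

lemma is_solution_square_integral_le:
  fixes \<theta> :: "real \<Rightarrow> real \<Rightarrow> real" and g :: "real \<Rightarrow> real"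
  assumes "0 < M" "0 < \<epsilon>" and sol: "is_solution M \<epsilon> T \<theta>0 \<theta>"
    and datum: "\<And>x. x \<in> {0<..<1} \<Longrightarrow> \<theta>0 x = g x" and g: "continuous_on {0..1} g"
    and t: "t \<in> {0..T}"
  shows "(LINT x:{0..1}|lborel. (\<theta> x t)^2)
    \<le> 2 * exp (M / \<epsilon>) * exp (- (M^2 / (2 * \<epsilon>)) * t) * integral {0..1} (\<lambda>x. exp (- (M / \<epsilon>) * x) * (g x)^2)"
    (is "_ \<le> 2 * exp (M / \<epsilon>) * ?decay * ?I")
proof (cases "t = 0")
  case True
  have "(LINT x:{0..1}|lborel. (\<theta> x t)^2) = integral {0..1} (\<lambda>x. (g x)^2)"
    using sol datum g True unfolding is_solution_def
    by (intro set_integral_01_eq_integral) (auto intro!: continuous_intros)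
  also have "\<dots> \<le> exp (M / \<epsilon>) * ?I"
    using g assms(1,2) by (intro integral_square_le_exp_weighted) auto
  also have "\<dots> \<le> 2 * exp (M / \<epsilon>) * ?decay * ?I"
  proof -
    have "0 \<le> ?I"
      using g \<open>0 < \<epsilon>\<close> by (intro integral_nonneg integrable_continuous_interval) (auto intro!: continuous_intros)
    then show ?thesis using True by simp
  qed
  finally show ?thesis .
next
  case False
  then have t: "0 < t" "t \<le> T" using t by auto
  have \<theta>_cont: "continuous_on {0..1} (\<lambda>x. \<theta> x t)"
    using is_solution_slice_continuous[OF sol] t by auto
  have "(LINT x:{0..1}|lborel. (\<theta> x t)^2) = integral {0..1} (\<lambda>x. (\<theta> x t)^2)"
    using \<theta>_cont by (intro set_integral_01_eq_integral) (auto intro!: continuous_intros)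
  also have "\<dots> \<le> exp (M / \<epsilon>) * integral {0..1} (\<lambda>x. exp (- (M / \<epsilon>) * x) * (\<theta> x t)^2)"
    using \<theta>_cont assms(1,2) by (intro integral_square_le_exp_weighted) auto
  also have "\<dots> = exp (M / \<epsilon>) * ?decay * weighted_energy M \<epsilon> \<theta> t"
    by (simp add: weighted_energy_def exp_minus)
  also have "\<dots> \<le> exp (M / \<epsilon>) * ?decay * (2 * ?I)"
    using is_solution_weighted_energy_le[OF assms(1,2) sol datum g t] by (intro mult_left_mono) auto
  finally show ?thesis
    by (simp add: mult_ac)
qed

lemma is_solution_L2norm01_le:
  fixes \<theta> :: "real \<Rightarrow> real \<Rightarrow> real" and g :: "real \<Rightarrow> real"
  assumes "0 < M" "0 < \<epsilon>" and sol: "is_solution M \<epsilon> T \<theta>0 \<theta>"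
    and datum: "\<And>x. x \<in> {0<..<1} \<Longrightarrow> \<theta>0 x = g x" and g_cont: "continuous_on {0..1} g"
    and g_bound: "\<And>x. x \<in> {0..1} \<Longrightarrow> \<bar>g x\<bar> \<le> K * exp (- M * ((1 - x) / \<epsilon>))"
    and t: "t \<in> {0..T}"
  shows "L2norm01 (\<lambda>x. \<theta> x t) \<le> K * sqrt (2 / M) * sqrt \<epsilon> * exp (- (M^2 / (4 * \<epsilon>)) * t)"
proof -
  have "0 \<le> K" using g_bound[of 1] by simp
  have layer: "exp (M / \<epsilon>) * integral {0..1} (\<lambda>x. exp (- (M / \<epsilon>) * x) * (g x)^2) \<le> K^2 * (\<epsilon> / M)"
    using mult_left_mono[OF integral_weighted_layer_square_le[OF assms(1,2) g_cont g_bound], of "exp (M / \<epsilon>)"]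
    by (simp add: exp_minus field_simps)
  have "(LINT x:{0..1}|lborel. (\<theta> x t)^2) \<le> 2 * exp (- (M^2 / (2 * \<epsilon>)) * t) *
      (exp (M / \<epsilon>) * integral {0..1} (\<lambda>x. exp (- (M / \<epsilon>) * x) * (g x)^2))"
    using is_solution_square_integral_le[OF assms(1-5) t] by (simp only: mult_ac)
  also have "\<dots> \<le> 2 * exp (- (M^2 / (2 * \<epsilon>)) * t) * (K^2 * (\<epsilon> / M))"
    by (rule mult_left_mono[OF layer]) simp
  also have "\<dots> = (K * sqrt (2 / M) * sqrt \<epsilon> * exp (- (M^2 / (4 * \<epsilon>)) * t))^2"
  proof -
    have "exp (- (M^2 / (2 * \<epsilon>)) * t) = (exp (- (M^2 / (4 * \<epsilon>)) * t))^2"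
      by (simp add: power2_eq_square field_simps flip: exp_add)
    then show ?thesis
      using assms(1,2) by (simp add: power_mult_distrib real_sqrt_pow2)
  qed
  finally show ?thesis
    unfolding L2norm01_def using \<open>0 \<le> K\<close> assms(1,2) by (simp add: real_le_lsqrt)
qed
text \<open>This is where \<open>\<gamma> \<le> 1/2\<close> enters: \<open>\<epsilon> powr \<gamma> \<ge> sqrt \<epsilon>\<close>, and
  \<open>1 / (2 sqrt \<epsilon>) - 1 / (4 \<epsilon>) \<le> 1/4\<close> for all \<open>\<epsilon> > 0\<close>.\<close>

lemma exp_decay_rate_le:
  fixes M \<epsilon> \<gamma> t T :: real
  assumes "0 < \<epsilon>" "\<epsilon> < 1" "0 < \<gamma>" "\<gamma> \<le> 1/2" "0 \<le> t" "t \<le> T"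
  shows "exp (- (M^2 / (4 * \<epsilon>)) * t) \<le> exp (M^2 * T) * exp (- (M^2 / (2 * \<epsilon> powr \<gamma>)) * t)"
proof -
  define s where "s = sqrt \<epsilon>"
  have s: "0 < s" "\<epsilon> = s^2" using assms unfolding s_def by auto
  have "\<epsilon> powr (1/2) \<le> \<epsilon> powr \<gamma>" by (rule powr_mono') (use assms in auto)
  then have "s \<le> \<epsilon> powr \<gamma>" unfolding s_def using assms by (simp add: powr_half_sqrt)
  then have "M^2 / (2 * \<epsilon> powr \<gamma>) \<le> M^2 / (2 * s)"
    using s by (intro divide_left_mono) auto
  moreover have "M^2 / (2 * s) - M^2 / (4 * \<epsilon>) = M^2 / 4 - M^2 * (s - 1)^2 / (4 * s^2)"
    using s by (simp add: field_simps power2_eq_square)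
  moreover have "0 \<le> M^2 * (s - 1)^2 / (4 * s^2)"
    by simp
  ultimately have "M^2 / (2 * \<epsilon> powr \<gamma>) - M^2 / (4 * \<epsilon>) \<le> M^2 / 4"
    by linarith
  then have "(M^2 / (2 * \<epsilon> powr \<gamma>) - M^2 / (4 * \<epsilon>)) * t \<le> M^2 / 4 * t"
    using assms by (intro mult_right_mono) auto
  also have "\<dots> \<le> M^2 / 4 * T" using assms by (intro mult_left_mono) auto
  also have "\<dots> \<le> M^2 * T" using assms mult_right_mono[of "M^2 / 4" "M^2" T] by simp
  finally show ?thesis by (simp add: algebra_simps flip: exp_add)
qed

lemma boundary_layer_abs_le:
  fixes M \<epsilon> a b x :: real
  assumes "x \<in> {0..1}"
  shows "\<bar>exp (- M * ((1 - x) / \<epsilon>)) * (a + (1 - x) * b)\<bar> \<le> (\<bar>a\<bar> + \<bar>b\<bar>) * exp (- M * ((1 - x) / \<epsilon>))"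
proof -
  have "\<bar>a + (1 - x) * b\<bar> \<le> \<bar>a\<bar> + \<bar>b\<bar>"
    using assms abs_triangle_ineq[of a "(1 - x) * b"] mult_left_le_one_le[of "\<bar>b\<bar>" "1 - x"]
    by (auto simp: abs_mult)
  then show ?thesis
    by (simp add: abs_mult mult.commute mult_left_mono)
qed

theorem lemma4p1:
  fixes M T \<gamma> :: real and Y V :: "nat \<Rightarrow> real \<Rightarrow> real"
  assumes "M > 0" and "T \<ge> 1 / M"
    and "C4_on {0..1} Y" and "C4_on {0..T} V"
    and "0 < \<gamma>" and "\<gamma> \<le> 1/2"
  shows "\<exists>c. \<forall>\<epsilon>\<in>{0<..<1}. \<forall>\<theta>.
           is_solution M \<epsilon> T (\<lambda>x. Ptil0 M Y V \<epsilon> x - Y 0 x) \<theta> \<longrightarrow>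
           (\<forall>t\<in>{0..T}. L2norm01 (\<lambda>x. \<theta> x t)
              \<le> c * exp (- (\<epsilon> powr \<gamma> / \<epsilon>)) + c * sqrt \<epsilon> * exp (- (M^2 / (2 * \<epsilon> powr \<gamma>)) * t))"
proof -
  define c where "c = (\<bar>Y 0 1\<bar> + \<bar>Y 1 1\<bar>) * sqrt (2 / M) * exp (M^2 * T)"
  have bound: "L2norm01 (\<lambda>x. \<theta> x t) \<le> c * sqrt \<epsilon> * exp (- (M^2 / (2 * \<epsilon> powr \<gamma>)) * t)"
    if \<epsilon>: "\<epsilon> \<in> {0<..<1}" and sol: "is_solution M \<epsilon> T (\<lambda>x. Ptil0 M Y V \<epsilon> x - Y 0 x) \<theta>"
      and t: "t \<in> {0..T}" for \<epsilon> \<theta> t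
  proof -
    define g where "g x = - (exp (- M * ((1 - x) / \<epsilon>)) * (Y 0 1 + (1 - x) * Y 1 1))" for x
    have "L2norm01 (\<lambda>x. \<theta> x t)
        \<le> (\<bar>Y 0 1\<bar> + \<bar>Y 1 1\<bar>) * sqrt (2 / M) * sqrt \<epsilon> * exp (- (M^2 / (4 * \<epsilon>)) * t)"
      using \<epsilon> t Ptil0_eq[OF \<open>M > 0\<close> _ \<open>C4_on {0..1} Y\<close>] boundary_layer_abs_le
      by (intro is_solution_L2norm01_le[OF \<open>M > 0\<close> _ sol, where g = g])
         (auto simp: g_def intro!: continuous_intros)
    also have "\<dots> \<le> (\<bar>Y 0 1\<bar> + \<bar>Y 1 1\<bar>) * sqrt (2 / M) * sqrt \<epsilon>
        * (exp (M^2 * T) * exp (- (M^2 / (2 * \<epsilon> powr \<gamma>)) * t))"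
      using exp_decay_rate_le[of \<epsilon> \<gamma> t T M] \<epsilon> t assms by (intro mult_left_mono) auto
    finally show ?thesis
      by (simp add: c_def mult_ac)
  qed
  have "0 \<le> c"
    using \<open>M > 0\<close> by (simp add: c_def)
  then show ?thesis
    using bound by (intro exI[of _ c]) (fastforce intro: add_increasing)
qed

end
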